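(* Fix $p\in[1,\infty)$. Let $\Theta:\mathcal A/\mathcal J\to\mathcal B(\ell^p)$ be a continuous algebra homomorphism such that $\Theta(\pi_{\mathcal J}(\delta_{s_i^*}))=A_i$ for $i\in\{1,2\}$. Then $\Theta$ is injective but not bounded below (i.e. there is no $c>0$ with $\|\Theta(a)\|\geqslant c\|a\|$ for all $a\in\mathcal A/\mathcal J$).
   Context: Let $\mathrm{Cu}_2$ be the involutive monoid with identity $e$ and zero element $\lozenge$ (so $\lozenge t=\lozenge=t\lozenge$ for all $t$), generated by $s_1,s_2,s_1^*,s_2^*$ subject to $s_1^*s_1=e=s_2^*s_2$ and $s_1^*s_2=\lozenge=s_2^*s_1$, with involution $t\mapsto t^*$ satisfying $(t^* )^*=t$, $(tu)^*=u^*t^*$. Let $\mathcal A=\ell^1(\mathrm{Cu}_2\setminus\{\lozenge\})$ with product $\#$ determined by bilinearity and continuity from $\delta_s\#\delta_t=\delta_{st}$ if $st\neq\lozenge$ and $\delta_s\#\delta_t=0$ if $st=\lozenge$; this is a unital Banach algebra with unit $\delta_e$. Let $f_0=\delta_e-\delta_{s_1s_1^*}-\delta_{s_2s_2^*}$, let $\mathcal J$ be the closed two-sided ideal of $\mathcal A$ generated by $f_0$, and let $\pi_{\mathcal J}:\mathcal A\to\mathcal A/\mathcal J$ be the quotient map ($\mathcal A/\mathcal J$ carries the quotient norm). For $\ell^p=\ell^p(\mathbb N)$ define $A_1,A_2\in\mathcal B(\ell^p)$ by $(A_1x)(n)=x_{2n}$ and $(A_2x)(n)=x_{2n-1}$.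 *)

theory Defs
  imports "HOL-Analysis.Analysis" "HOL-Library.Function_Algebras"
begin

datatype gen = G1 | G2

text \<open>Every nonzero element of Cu_2 has a unique normal form s_u s_v^*, where
  u, v are words over the generators (s_u = s_(u_1) ... s_(u_n)).  The pair (u,v)
  represents s_u s_v^*; the zero element is represented by None in the product.\<close>

type_synonym cu = "gen list \<times> gen list"

definition cu_e :: cu where "cu_e = ([], [])"
definition cu_s :: "gen \<Rightarrow> cu" where "cu_s i = ([i], [])"
definition cu_star :: "gen \<Rightarrow> cu" where "cu_star i = ([], [i])"

definition cu_mult :: "cu \<Rightarrow> cu \<Rightarrow> cu option" where
  "cu_mult x y = (case x of (u, v) \<Rightarrow> case y of (w, z) \<Rightarrow>
     (if (\<exists>r. w = v @ r) then Some (u @ drop (length v) w, z)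
      else if (\<exists>r. v = w @ r) then Some (u, z @ drop (length w) v)
      else None))"

definition l1 :: "(cu \<Rightarrow> complex) set" where
  "l1 = {f. (\<lambda>x. norm (f x)) summable_on UNIV}"

definition norm1 :: "(cu \<Rightarrow> complex) \<Rightarrow> real" where
  "norm1 f = infsum (\<lambda>x. norm (f x)) UNIV"

definition delta :: "cu \<Rightarrow> cu \<Rightarrow> complex" where
  "delta s = (\<lambda>y. if y = s then 1 else 0)"

text \<open>The product #: delta_s # delta_t = delta_(st) (or 0 if st is zero), extended
  bilinearly and continuously, i.e. a twisted convolution.\<close>
definition conv :: "(cu \<Rightarrow> complex) \<Rightarrow> (cu \<Rightarrow> complex) \<Rightarrow> cu \<Rightarrow> complex" where
  "conv f g = (\<lambda>x. infsum (\<lambda>(s, t). f s * g t) {(s, t). cu_mult s t = Some x})"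

definition f0 :: "cu \<Rightarrow> complex" where
  "f0 = delta cu_e - delta ([G1], [G1]) - delta ([G2], [G2])"

definition is_closed_ideal :: "(cu \<Rightarrow> complex) set \<Rightarrow> bool" where
  "is_closed_ideal I \<longleftrightarrow> I \<subseteq> l1 \<and> 0 \<in> I \<and>
     (\<forall>a\<in>I. \<forall>b\<in>I. a + b \<in> I) \<and>
     (\<forall>c::complex. \<forall>a\<in>I. (\<lambda>x. c * a x) \<in> I) \<and>
     (\<forall>a\<in>l1. \<forall>b\<in>I. conv a b \<in> I \<and> conv b a \<in> I) \<and>
     (\<forall>f\<in>l1. (\<forall>e>0. \<exists>g\<in>I. norm1 (f - g) < e) \<longrightarrow> f \<in> I)"

definition J :: "(cu \<Rightarrow> complex) set" where
  "J = \<Inter> {I. is_closed_ideal I \<and> f0 \<in> I}"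

definition qmap :: "(cu \<Rightarrow> complex) \<Rightarrow> (cu \<Rightarrow> complex) set" where
  "qmap a = {a + j | j. j \<in> J}"

definition quot :: "(cu \<Rightarrow> complex) set set" where
  "quot = qmap ` l1"

definition qnorm :: "(cu \<Rightarrow> complex) \<Rightarrow> real" where
  "qnorm a = Inf {norm1 (a - j) | j. j \<in> J}"

text \<open>l^p(N) with N = {1,2,...} is represented by sequences indexed from 0:
  the sequence x :: nat => complex stands for (x 0, x 1, ...) = (x_1, x_2, ...).\<close>

definition lp :: "real \<Rightarrow> (nat \<Rightarrow> complex) set" where
  "lp p = {x. summable (\<lambda>n. norm (x n) powr p)}"

definition lpnorm :: "real \<Rightarrow> (nat \<Rightarrow> complex) \<Rightarrow> real" where
  "lpnorm p x = (\<Sum>n. norm (x n) powr p) powr (1 / p)"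

definition is_bop :: "real \<Rightarrow> ((nat \<Rightarrow> complex) \<Rightarrow> (nat \<Rightarrow> complex)) \<Rightarrow> bool" where
  "is_bop p T \<longleftrightarrow> (\<forall>x\<in>lp p. T x \<in> lp p) \<and>
     (\<forall>x\<in>lp p. \<forall>y\<in>lp p. T (x + y) = T x + T y) \<and>
     (\<forall>c::complex. \<forall>x\<in>lp p. T (\<lambda>n. c * x n) = (\<lambda>n. c * T x n)) \<and>
     (\<exists>K. \<forall>x\<in>lp p. lpnorm p (T x) \<le> K * lpnorm p x)"

definition opnorm :: "real \<Rightarrow> ((nat \<Rightarrow> complex) \<Rightarrow> (nat \<Rightarrow> complex)) \<Rightarrow> real" where
  "opnorm p T = Sup {lpnorm p (T x) | x. x \<in> lp p \<and> lpnorm p x \<le> 1}"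

text \<open>(A_1 x)(n) = x_(2n), (A_2 x)(n) = x_(2n-1) (1-based), shifted to 0-based indices.\<close>
definition A1 :: "(nat \<Rightarrow> complex) \<Rightarrow> nat \<Rightarrow> complex" where
  "A1 x = (\<lambda>m. x (2 * m + 1))"

definition A2 :: "(nat \<Rightarrow> complex) \<Rightarrow> nat \<Rightarrow> complex" where
  "A2 x = (\<lambda>m. x (2 * m))"

definition Ai :: "gen \<Rightarrow> (nat \<Rightarrow> complex) \<Rightarrow> nat \<Rightarrow> complex" where
  "Ai i = (case i of G1 \<Rightarrow> A1 | G2 \<Rightarrow> A2)"

end

theory Submission
  imports Defs
begin

text \<open>
  The matrix entries of \<open>\<Theta>(a)\<close> are pairings of \<open>a\<close> with explicit 0/1-valued functions on
  Cu_2: \<open>\<Theta>(\<delta>(s_i^*)) = A_i\<close> forces \<open>\<Theta>(\<delta>(s_i))\<close> to be the isometry writing \<open>x\<close> into the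
  coordinates read by \<open>A_i\<close>. If all these pairings vanish, \<open>a\<close> lies in J: a finite part
  of \<open>a\<close> is refined by the Cuntz relation until all its words have the same depth, and the
  vanishing pairings make the refined remainder small. Hence \<open>\<Theta>\<close> is injective.

  On the other hand, every bounded harmonic \<open>\<psi>\<close>, i.e.
  \<open>\<psi>(s_u s_v^*) = \<psi>(s_u1 s_v1^*) + \<psi>(s_u2 s_v2^*)\<close>, annihilates J. For
  \<open>\<psi>(s_u s_v^*) = 2^(-|u|)\<close> and \<open>a = (\<delta>(s_1^*) + \<delta>(s_2^*))/2\<close> this gives \<open>\<psi>(a^n) = 1\<close>,
  so \<open>\<pi>(a^n)\<close> has quotient norm at least 1, while \<open>\<Theta>(a) = (A_1 + A_2)/2\<close> has norm at most
  \<open>2^(-1/p) < 1\<close> on \<open>l^p\<close>.\<close>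

lemma cu_mult_isometry_left: "cu_mult (u, []) (a, b) = Some (u @ a, b)"
  by (simp add: cu_mult_def)

lemma cu_mult_coisometry_right: "cu_mult (a, b) ([], v) = Some (a, v @ b)"
  by (cases b) (auto simp: cu_mult_def)

lemma infsum_single:
  assumes "\<And>y. y \<in> A \<Longrightarrow> y \<noteq> x \<Longrightarrow> f y = (0::'b::{comm_monoid_add,t2_space})"
  shows "infsum f A = (if x \<in> A then f x else 0)"
proof -
  have "infsum f A = infsum f (A \<inter> {x})"
    by (rule infsum_cong_neutral) (use assms in auto)
  then show ?thesis
    by (cases "x \<in> A") auto
qed

lemma conv_delta_delta:
  "conv (delta s) (delta t) = (case cu_mult s t of None \<Rightarrow> 0 | Some x \<Rightarrow> delta x)"
proof
  fix x
  have "conv (delta s) (delta t) x =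
      (if (s, t) \<in> {(s', t'). cu_mult s' t' = Some x} then delta s s * delta t t else 0)"
    unfolding conv_def
    by (subst infsum_single[where x = "(s, t)"]) (auto simp: delta_def split: if_splits)
  then show "conv (delta s) (delta t) x = (case cu_mult s t of None \<Rightarrow> 0 | Some x \<Rightarrow> delta x) x"
    by (auto simp: delta_def split: option.splits)
qed

lemma conv_delta_coisometry:
  "conv f (delta ([], v)) = (\<lambda>(a, c). if \<exists>r. c = v @ r then f (a, drop (length v) c) else 0)"
proof
  fix x :: cu
  obtain a c where x: "x = (a, c)" by force
  show "conv f (delta ([], v)) x =
      (\<lambda>(a, c). if \<exists>r. c = v @ r then f (a, drop (length v) c) else 0) x"
  proof (cases "\<exists>r. c = v @ r")
    case True
    then obtain r where r: "c = v @ r" by blast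
    have "conv f (delta ([], v)) x = f (a, r)"
      unfolding conv_def
      by (subst infsum_single[where x = "((a, r), ([], v))"])
         (auto simp: delta_def x r cu_mult_coisometry_right split: if_splits)
    then show ?thesis using r x by simp
  next
    case False
    have "conv f (delta ([], v)) x = 0"
      unfolding conv_def
      by (rule infsum_0) (use False in \<open>auto simp: delta_def x cu_mult_coisometry_right\<close>)
    then show ?thesis using False x by simp
  qed
qed

lemma conv_delta_isometry:
  "conv (delta (u, [])) f = (\<lambda>(c, b). if \<exists>r. c = u @ r then f (drop (length u) c, b) else 0)"
proof
  fix x :: cu
  obtain c b where x: "x = (c, b)" by force
  show "conv (delta (u, [])) f x =
      (\<lambda>(c, b). if \<exists>r. c = u @ r then f (drop (length u) c, b) else 0) x"
  proof (cases "\<exists>r. c = u @ r")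
    case True
    then obtain r where r: "c = u @ r" by blast
    have "conv (delta (u, [])) f x = f (r, b)"
      unfolding conv_def
      by (subst infsum_single[where x = "((u, []), (r, b))"])
         (auto simp: delta_def x r cu_mult_isometry_left split: if_splits)
    then show ?thesis using r x by simp
  next
    case False
    have "conv (delta (u, [])) f x = 0"
      unfolding conv_def
      by (rule infsum_0) (use False in \<open>auto simp: delta_def x cu_mult_isometry_left\<close>)
    then show ?thesis using False x by simp
  qed
qed

lemma l1_norm_summable_on: "a \<in> l1 \<Longrightarrow> (\<lambda>x. norm (a x)) summable_on A"
  unfolding l1_def using summable_on_subset_banach by (metis mem_Collect_eq subset_UNIV)

lemma zero_in_l1 [simp]: "0 \<in> l1"
  by (simp add: l1_def)

lemma delta_in_l1 [simp]: "delta s \<in> l1"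
  unfolding l1_def
  by (auto intro: finite_nonzero_values_imp_summable_on simp: delta_def)

lemma l1_add [simp]:
  assumes "a \<in> l1" "b \<in> l1"
  shows "a + b \<in> l1"
proof -
  have "(\<lambda>x. norm (a x) + norm (b x)) summable_on UNIV"
    using assms by (auto simp: l1_def intro: summable_on_add)
  then have "(\<lambda>x. norm ((a + b) x)) summable_on UNIV"
    by (rule summable_on_comparison_test) (auto simp: norm_triangle_ineq)
  then show ?thesis
    by (simp add: l1_def)
qed

lemma l1_scale [simp]: "a \<in> l1 \<Longrightarrow> (\<lambda>x. c * a x) \<in> l1"
  unfolding l1_def by (auto simp: norm_mult intro: summable_on_cmult_right)

lemma l1_uminus [simp]: "a \<in> l1 \<Longrightarrow> - a \<in> l1"
  unfolding l1_def by auto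

lemma l1_diff [simp]: "a \<in> l1 \<Longrightarrow> b \<in> l1 \<Longrightarrow> a - b \<in> l1"
  using l1_add[of a "- b"] by simp

lemma l1_sum: "finite F \<Longrightarrow> (\<And>t. t \<in> F \<Longrightarrow> f t \<in> l1) \<Longrightarrow> sum f F \<in> l1"
  by (induction F rule: finite_induct) auto

lemma l1_finite_support: "finite {x. a x \<noteq> 0} \<Longrightarrow> a \<in> l1"
  unfolding l1_def by (auto intro: finite_nonzero_values_imp_summable_on)

lemma norm1_nonneg: "norm1 a \<ge> 0"
  unfolding norm1_def by (rule infsum_nonneg) auto

lemma norm1_minus_commute: "norm1 (a - b) = norm1 (b - a)"
  unfolding norm1_def by (simp add: norm_minus_commute)

lemma norm1_triangle:
  assumes "a \<in> l1" "b \<in> l1"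
  shows "norm1 (a + b) \<le> norm1 a + norm1 b"
proof -
  have "norm1 (a + b) \<le> infsum (\<lambda>x. norm (a x) + norm (b x)) UNIV"
    unfolding norm1_def
    by (rule infsum_mono)
       (use assms l1_add[OF assms] in \<open>auto simp: l1_def intro: norm_triangle_ineq summable_on_add\<close>)
  also have "\<dots> = norm1 a + norm1 b"
    unfolding norm1_def by (rule infsum_add) (use assms in \<open>auto simp: l1_def\<close>)
  finally show ?thesis .
qed

lemma norm1_finite_support:
  assumes "finite F" "\<And>x. x \<notin> F \<Longrightarrow> a x = 0"
  shows "norm1 a = (\<Sum>t\<in>F. norm (a t))"
proof -
  have "norm1 a = infsum (\<lambda>t. norm (a t)) F"
    unfolding norm1_def by (rule infsum_cong_neutral) (use assms in auto)
  then show ?thesis using assms by simp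
qed

lemma l1_tail_small:
  assumes "a \<in> l1" "e > 0"
  obtains F where "finite F" "infsum (\<lambda>t. norm (a t)) (- F) < e"
proof -
  have s: "(\<lambda>t. norm (a t)) summable_on UNIV" using assms l1_def by auto
  obtain F where F: "finite F"
    "dist (sum (\<lambda>t. norm (a t)) F) (infsum (\<lambda>t. norm (a t)) UNIV) \<le> e / 2"
    using infsum_finite_approximation[OF s, of "e / 2"] assms by auto
  have "infsum (\<lambda>t. norm (a t)) UNIV
      = infsum (\<lambda>t. norm (a t)) F + infsum (\<lambda>t. norm (a t)) (- F)"
    using infsum_Un_disjoint[of "\<lambda>t. norm (a t)" F "- F"] F(1) l1_norm_summable_on[OF assms(1)]
    by (simp add: Compl_partition)
  then show ?thesis using F assms that by (auto simp: dist_real_def)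
qed

lemma l1_tail_mono:
  assumes "a \<in> l1" "D \<subseteq> E"
  shows "infsum (\<lambda>t. norm (a t)) D \<le> infsum (\<lambda>t. norm (a t)) E"
  by (rule infsum_mono_neutral) (use assms l1_norm_summable_on in auto)

lemma sum_apply: "(sum f F) x = (\<Sum>t\<in>F. f t x)"
  by (induction F rule: infinite_finite_induct) auto

definition truncate :: "cu set \<Rightarrow> (cu \<Rightarrow> complex) \<Rightarrow> cu \<Rightarrow> complex" where
  "truncate F a = (\<lambda>s. if s \<in> F then a s else 0)"

lemma truncate_in_l1: "finite F \<Longrightarrow> truncate F a \<in> l1"
  unfolding truncate_def by (rule l1_finite_support) (auto intro: finite_subset)

lemma norm1_truncate_diff:
  "norm1 (truncate F a - a) = infsum (\<lambda>t. norm (a t)) (- F)"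
proof -
  have "norm1 (truncate F a - a) = infsum (\<lambda>t. norm ((truncate F a - a) t)) (- F)"
    unfolding norm1_def by (rule infsum_cong_neutral) (auto simp: truncate_def)
  also have "\<dots> = infsum (\<lambda>t. norm (a t)) (- F)"
    by (rule infsum_cong) (auto simp: truncate_def)
  finally show ?thesis .
qed

lemma truncate_eq_sum_delta:
  "finite F \<Longrightarrow> truncate F a = (\<Sum>t\<in>F. (\<lambda>s. a t * delta t s))"
  by (simp add: truncate_def delta_def fun_eq_iff sum_apply sum.delta' if_distrib[of "times _"] cong: if_cong)

definition pairing :: "(cu \<Rightarrow> complex) \<Rightarrow> (cu \<Rightarrow> complex) \<Rightarrow> complex" where
  "pairing \<psi> a = infsum (\<lambda>t. a t * \<psi> t) UNIV"

lemma bounded_mult_norm_summable_on: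
  assumes "a \<in> l1" "\<And>t. norm (\<psi> t) \<le> 1"
  shows "(\<lambda>t. norm (a t * \<psi> t)) summable_on A"
  by (rule summable_on_comparison_test[OF l1_norm_summable_on[OF assms(1)]])
     (use assms(2) in \<open>auto simp: norm_mult intro: mult_left_le\<close>)

lemma bounded_mult_summable_on:
  assumes "a \<in> l1" "\<And>t. norm (\<psi> t) \<le> 1"
  shows "(\<lambda>t. a t * \<psi> t) summable_on A"
  by (rule abs_summable_summable) (rule bounded_mult_norm_summable_on[OF assms])

lemma norm_pairing_le:
  assumes "a \<in> l1" "\<And>t. norm (\<psi> t) \<le> 1"
  shows "norm (pairing \<psi> a) \<le> norm1 a"
proof -
  have "norm (pairing \<psi> a) \<le> infsum (\<lambda>t. norm (a t * \<psi> t)) UNIV"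
    unfolding pairing_def
    by (rule norm_infsum_bound) (rule bounded_mult_norm_summable_on[OF assms])
  also have "\<dots> \<le> norm1 a"
    unfolding norm1_def
    by (rule infsum_mono)
       (use assms bounded_mult_norm_summable_on[OF assms] in
        \<open>auto simp: l1_def norm_mult intro: mult_left_le\<close>)
  finally show ?thesis .
qed

lemma pairing_add:
  assumes "a \<in> l1" "b \<in> l1" "\<And>t. norm (\<psi> t) \<le> 1"
  shows "pairing \<psi> (a + b) = pairing \<psi> a + pairing \<psi> b"
  unfolding pairing_def
  using infsum_add[OF bounded_mult_summable_on[OF assms(1,3)] bounded_mult_summable_on[OF assms(2,3)]]
  by (simp add: distrib_right)

lemma pairing_scale: "pairing \<psi> (\<lambda>x. c * a x) = c * pairing \<psi> a"
  unfolding pairing_def by (simp add: mult.assoc infsum_cmult_right')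

lemma pairing_diff:
  assumes "a \<in> l1" "b \<in> l1" "\<And>t. norm (\<psi> t) \<le> 1"
  shows "pairing \<psi> (a - b) = pairing \<psi> a - pairing \<psi> b"
  using pairing_add[of a "- b" \<psi>] assms by (simp add: pairing_def infsum_uminus)

lemma pairing_finite_support:
  assumes "finite F" "\<And>x. x \<notin> F \<Longrightarrow> a x = 0"
  shows "pairing \<psi> a = (\<Sum>t\<in>F. a t * \<psi> t)"
proof -
  have "pairing \<psi> a = infsum (\<lambda>t. a t * \<psi> t) F"
    unfolding pairing_def by (rule infsum_cong_neutral) (use assms in auto)
  then show ?thesis using assms by simp
qed

lemma pairing_delta: "pairing \<psi> (delta s) = \<psi> s"
  using pairing_finite_support[of "{s}" "delta s" \<psi>] by (simp add: delta_def)

lemma pairing_truncate: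
  assumes "finite F"
  shows "pairing \<psi> (truncate F a) = (\<Sum>t\<in>F. a t * \<psi> t)"
proof -
  have "pairing \<psi> (truncate F a) = (\<Sum>t\<in>F. truncate F a t * \<psi> t)"
    by (rule pairing_finite_support[OF assms]) (simp add: truncate_def)
  then show ?thesis
    by (simp add: truncate_def)
qed

definition translate :: "(cu \<Rightarrow> complex) \<Rightarrow> cu \<Rightarrow> cu \<Rightarrow> complex" where
  "translate \<psi> s t = (case cu_mult s t of None \<Rightarrow> 0 | Some x \<Rightarrow> \<psi> x)"

lemma norm_translate_le: "(\<And>x. norm (\<psi> x) \<le> 1) \<Longrightarrow> norm (translate \<psi> s t) \<le> 1"
  by (auto simp: translate_def split: option.splits)

lemma l1_product_norm_summable_on:
  assumes a: "a \<in> l1" and b: "b \<in> l1"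
  shows "(\<lambda>st. norm (a (fst st) * b (snd st))) summable_on A"
proof -
  have "(\<lambda>z. norm ((\<lambda>(s, t). a s * b t) z)) summable_on UNIV \<times> UNIV"
  proof (rule Infinite_Sum.abs_summable_on_Sigma_iff[where f = "\<lambda>(s, t). a s * b t", THEN iffD2],
      intro conjI ballI)
    fix s :: cu
    show "(\<lambda>t. norm ((\<lambda>(s, t). a s * b t) (s, t))) summable_on UNIV"
      using l1_norm_summable_on[OF b] by (simp add: norm_mult summable_on_cmult_right)
  next
    have "(\<lambda>s. norm (a s) * norm1 b) summable_on UNIV"
      using l1_norm_summable_on[OF a] by (rule summable_on_cmult_left)
    then show "(\<lambda>s. norm (infsum (\<lambda>t. norm ((\<lambda>(s, t). a s * b t) (s, t))) UNIV)) summable_on UNIV"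
      by (simp add: norm_mult norm1_def infsum_cmult_right' abs_mult norm1_nonneg
          flip: norm1_def)
  qed
  then show ?thesis
    using summable_on_subset_banach by (fastforce simp: case_prod_beta)
qed

lemma l1_product_summable_on:
  assumes "a \<in> l1" "b \<in> l1" "\<And>st. norm (c st) \<le> 1"
  shows "(\<lambda>st. a (fst st) * b (snd st) * c st) summable_on A"
  by (rule abs_summable_summable, rule summable_on_comparison_test[OF l1_product_norm_summable_on[OF assms(1,2)]])
     (use assms(3) in \<open>auto simp: norm_mult intro: mult_left_le\<close>)

text \<open>Fubini for the twisted convolution: the pairs \<open>(s, t)\<close> with \<open>st \<noteq> \<lozenge>\<close> are
  partitioned into the fibres of the product map.\<close>

definition fibre :: "cu \<Rightarrow> (cu \<times> cu) set" where
  "fibre x = {(s, t). cu_mult s t = Some x}"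

lemma bij_betw_snd_fibres: "bij_betw snd (Sigma UNIV fibre) {(s, t). cu_mult s t \<noteq> None}"
  by (rule bij_betw_imageI) (auto simp: inj_on_def fibre_def image_iff)

lemma conv_in_l1_and_pairing:
  assumes a: "a \<in> l1" and b: "b \<in> l1" and \<psi>: "\<And>x. norm (\<psi> x) \<le> 1"
  shows "conv a b \<in> l1"
    and "pairing \<psi> (conv a b) = infsum (\<lambda>st. a (fst st) * b (snd st) * translate \<psi> (fst st) (snd st)) UNIV"
proof -
  define h where "h = (\<lambda>st. a (fst st) * b (snd st))"
  have h_norm: "\<And>A. (\<lambda>st. norm (h st)) summable_on A"
    unfolding h_def by (rule l1_product_norm_summable_on[OF a b])
  have S: "(\<lambda>z. norm (h (snd z))) summable_on Sigma UNIV fibre"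
    using summable_on_reindex_bij_betw[OF bij_betw_snd_fibres, of "\<lambda>st. norm (h st)"] h_norm by simp
  moreover have "(\<lambda>(x :: cu, st). norm (h st)) = (\<lambda>z. norm (h (snd z)))"
    by auto
  ultimately have "(\<lambda>(x :: cu, st). norm (h st)) summable_on Sigma UNIV fibre"
    by simp
  then have fibre_sums: "(\<lambda>x. infsum (\<lambda>st. norm (h st)) (fibre x)) summable_on UNIV"
    by (rule summable_on_Sigma_banach)
  have conv_fibre: "conv a b x = infsum h (fibre x)" for x
    unfolding conv_def fibre_def h_def by (simp add: split_def)
  have "norm (conv a b x) \<le> infsum (\<lambda>st. norm (h st)) (fibre x)" for x
    unfolding conv_fibre by (rule norm_infsum_bound) (rule h_norm)
  then show "conv a b \<in> l1"
    unfolding l1_def mem_Collect_eq by (rule summable_on_comparison_test[OF fibre_sums]) auto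
  define G where "G = (\<lambda>(x, st). h st * \<psi> x)"
  have "(\<lambda>z. norm (G z)) summable_on Sigma UNIV fibre"
    by (rule summable_on_comparison_test[OF S])
       (use \<psi> in \<open>auto simp: G_def norm_mult intro!: mult_left_le\<close>)
  then have G: "G summable_on Sigma UNIV fibre"
    by (rule abs_summable_summable)
  have "pairing \<psi> (conv a b) = infsum (\<lambda>x. infsum (\<lambda>st. h st * \<psi> x) (fibre x)) UNIV"
    unfolding pairing_def conv_fibre by (simp add: infsum_cmult_left')
  also have "\<dots> = infsum G (Sigma UNIV fibre)"
    using infsum_Sigma'_banach[of "\<lambda>x st. h st * \<psi> x" UNIV fibre] G
    by (simp add: G_def case_prod_beta)
  also have "\<dots> = infsum (\<lambda>z. h (snd z) * translate \<psi> (fst (snd z)) (snd (snd z))) (Sigma UNIV fibre)"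
    by (rule infsum_cong) (auto simp: G_def fibre_def translate_def)
  also have "\<dots> = infsum (\<lambda>st. h st * translate \<psi> (fst st) (snd st)) {(s, t). cu_mult s t \<noteq> None}"
    by (rule infsum_reindex_bij_betw[OF bij_betw_snd_fibres])
  also have "\<dots> = infsum (\<lambda>st. h st * translate \<psi> (fst st) (snd st)) UNIV"
    by (rule infsum_cong_neutral) (auto simp: translate_def split: option.splits)
  finally show "pairing \<psi> (conv a b) =
      infsum (\<lambda>st. a (fst st) * b (snd st) * translate \<psi> (fst st) (snd st)) UNIV"
    by (simp add: h_def)
qed

lemma conv_in_l1: "a \<in> l1 \<Longrightarrow> b \<in> l1 \<Longrightarrow> conv a b \<in> l1"
  using conv_in_l1_and_pairing(1)[of a b "\<lambda>_. 0"] by simp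

lemma pairing_conv_left:
  assumes a: "a \<in> l1" and b: "b \<in> l1" and \<psi>: "\<And>x. norm (\<psi> x) \<le> 1"
  shows "pairing \<psi> (conv a b) = infsum (\<lambda>s. a s * pairing (translate \<psi> s) b) UNIV"
proof -
  have S: "(\<lambda>(s, t). a s * b t * translate \<psi> s t) summable_on UNIV \<times> UNIV"
    using l1_product_summable_on[OF a b norm_translate_le[OF \<psi>], where A = UNIV]
    by (simp add: split_def)
  have "pairing \<psi> (conv a b) = infsum (\<lambda>(s, t). a s * b t * translate \<psi> s t) (UNIV \<times> UNIV)"
    using conv_in_l1_and_pairing(2)[OF a b \<psi>] by (simp add: split_def)
  also have "\<dots> = infsum (\<lambda>s. infsum (\<lambda>t. a s * b t * translate \<psi> s t) UNIV) UNIV"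
    using infsum_Sigma'_banach[OF S] by simp
  also have "\<dots> = infsum (\<lambda>s. a s * pairing (translate \<psi> s) b) UNIV"
    unfolding pairing_def by (simp add: mult.assoc infsum_cmult_right')
  finally show ?thesis .
qed

lemma pairing_conv_right:
  assumes a: "a \<in> l1" and b: "b \<in> l1" and \<psi>: "\<And>x. norm (\<psi> x) \<le> 1"
  shows "pairing \<psi> (conv a b) = infsum (\<lambda>t. b t * pairing (\<lambda>s. translate \<psi> s t) a) UNIV"
proof -
  have S: "(\<lambda>(s, t). a s * b t * translate \<psi> s t) summable_on UNIV \<times> UNIV"
    using l1_product_summable_on[OF a b norm_translate_le[OF \<psi>], where A = UNIV]
    by (simp add: split_def)
  have "pairing \<psi> (conv a b) = infsum (\<lambda>(s, t). a s * b t * translate \<psi> s t) (UNIV \<times> UNIV)"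
    using conv_in_l1_and_pairing(2)[OF a b \<psi>] by (simp add: split_def)
  also have "\<dots> = infsum (\<lambda>t. infsum (\<lambda>s. a s * b t * translate \<psi> s t) UNIV) UNIV"
    using infsum_swap_banach[OF S] infsum_Sigma'_banach[OF S] by simp
  also have "\<dots> = infsum (\<lambda>t. b t * pairing (\<lambda>s. translate \<psi> s t) a) UNIV"
    unfolding pairing_def
    by (simp add: infsum_cmult_right' mult.commute mult.left_commute flip: infsum_cmult_right')
  finally show ?thesis .
qed

lemma J_intro: "(\<And>I. is_closed_ideal I \<Longrightarrow> f0 \<in> I \<Longrightarrow> x \<in> I) \<Longrightarrow> x \<in> J"
  unfolding J_def by blast

lemma J_subset: "is_closed_ideal I \<Longrightarrow> f0 \<in> I \<Longrightarrow> J \<subseteq> I"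
  unfolding J_def by blast

lemma f0_in_J: "f0 \<in> J"
  by (rule J_intro)

lemma zero_in_J: "0 \<in> J"
  by (rule J_intro) (simp add: is_closed_ideal_def)

lemma J_add:
  assumes "a \<in> J" "b \<in> J"
  shows "a + b \<in> J"
proof (rule J_intro)
  fix I assume I: "is_closed_ideal I" "f0 \<in> I"
  then have "a \<in> I" "b \<in> I"
    using assms J_subset by blast+
  with I(1) show "a + b \<in> I"
    unfolding is_closed_ideal_def by blast
qed

lemma J_scale:
  assumes "a \<in> J"
  shows "(\<lambda>x. c * a x) \<in> J"
proof (rule J_intro)
  fix I assume I: "is_closed_ideal I" "f0 \<in> I"
  then have "a \<in> I"
    using assms J_subset by blast
  with I(1) show "(\<lambda>x. c * a x) \<in> I"
    unfolding is_closed_ideal_def by blast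
qed

lemma J_diff:
  assumes "a \<in> J" "b \<in> J"
  shows "a - b \<in> J"
proof -
  have "a + (\<lambda>x. (- 1) * b x) \<in> J"
    using assms by (intro J_add J_scale)
  moreover have "a + (\<lambda>x. (- 1) * b x) = a - b"
    by (auto simp: fun_eq_iff)
  ultimately show ?thesis
    by simp
qed

lemma J_sum: "finite F \<Longrightarrow> (\<And>t. t \<in> F \<Longrightarrow> f t \<in> J) \<Longrightarrow> sum f F \<in> J"
  by (induction F rule: finite_induct) (auto intro: J_add zero_in_J)

lemma J_conv:
  assumes "a \<in> l1" "b \<in> J"
  shows "conv a b \<in> J" and "conv b a \<in> J"
proof -
  have "conv a b \<in> I \<and> conv b a \<in> I" if I: "is_closed_ideal I" "f0 \<in> I" for I
  proof -
    have "b \<in> I"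
      using assms J_subset I by blast
    with I(1) assms(1) show ?thesis
      unfolding is_closed_ideal_def by blast
  qed
  then show "conv a b \<in> J" "conv b a \<in> J"
    by (blast intro: J_intro)+
qed

lemma J_closed:
  assumes "a \<in> l1" "\<And>e. e > 0 \<Longrightarrow> \<exists>g\<in>J. norm1 (a - g) < e"
  shows "a \<in> J"
proof (rule J_intro)
  fix I assume I: "is_closed_ideal I" "f0 \<in> I"
  then have "\<forall>e>0. \<exists>g\<in>I. norm1 (a - g) < e"
    using assms(2) J_subset by blast
  then show "a \<in> I"
    using I assms(1) unfolding is_closed_ideal_def by blast
qed

lemma qmap_eqI:
  assumes d: "a - b \<in> J"
  shows "qmap a = qmap b"
proof -
  have "{a + j |j. j \<in> J} = {b + j |j. j \<in> J}"
  proof (intro set_eqI iffI)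
    fix x assume "x \<in> {a + j |j. j \<in> J}"
    then obtain j where j: "j \<in> J" "x = a + j" by blast
    then have "x = b + ((a - b) + j)" by (simp add: algebra_simps)
    then show "x \<in> {b + j |j. j \<in> J}" using J_add[OF d j(1)] by blast
  next
    fix x assume "x \<in> {b + j |j. j \<in> J}"
    then obtain j where j: "j \<in> J" "x = b + j" by blast
    then have "x = a + (j - (a - b))" by (simp add: algebra_simps)
    then show "x \<in> {a + j |j. j \<in> J}" using J_diff[OF j(1) d] by blast
  qed
  then show ?thesis by (simp add: qmap_def)
qed

lemma qnorm_le_norm1: "qnorm a \<le> norm1 a"
  unfolding qnorm_def
  by (rule cInf_lower) (auto intro!: bdd_belowI[of _ 0] norm1_nonneg zero_in_J exI[of _ 0])

definition cuntz_relator :: "gen list \<Rightarrow> gen list \<Rightarrow> cu \<Rightarrow> complex" where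
  "cuntz_relator u v = delta (u, v) - delta (u @ [G1], v @ [G1]) - delta (u @ [G2], v @ [G2])"

lemma cuntz_relator_eq_conv:
  "cuntz_relator u v = conv (delta (u, [])) (conv f0 (delta ([], v)))"
proof
  fix x :: cu
  obtain c d where x: "x = (c, d)" by force
  show "cuntz_relator u v x = conv (delta (u, [])) (conv f0 (delta ([], v))) x"
    unfolding conv_delta_isometry conv_delta_coisometry x cuntz_relator_def f0_def cu_e_def
    by (auto simp: delta_def)
qed

lemma cuntz_relator_in_J: "cuntz_relator u v \<in> J"
  unfolding cuntz_relator_eq_conv by (intro J_conv delta_in_l1 f0_in_J)

fun refine :: "nat \<Rightarrow> cu \<Rightarrow> cu \<Rightarrow> complex" where
  "refine 0 t = delta t"
| "refine (Suc l) (u, v) = refine l (u @ [G1], v @ [G1]) + refine l (u @ [G2], v @ [G2])"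

lemma delta_minus_refine_in_J: "delta t - refine l t \<in> J"
proof (induction l arbitrary: t)
  case 0
  then show ?case using zero_in_J by (simp add: zero_fun_def)
next
  case (Suc l)
  obtain u v where t: "t = (u, v)" by force
  have "delta t - refine (Suc l) t = cuntz_relator u v
      + (delta (u @ [G1], v @ [G1]) - refine l (u @ [G1], v @ [G1]))
      + (delta (u @ [G2], v @ [G2]) - refine l (u @ [G2], v @ [G2]))"
    by (simp add: t cuntz_relator_def algebra_simps)
  then show ?case
    using Suc cuntz_relator_in_J by (metis J_add)
qed

lemma gen_cases: "(g :: gen) = G1 \<or> g = G2"
  by (cases g) auto

lemma refine_eq:
  "refine l (u, v) (x, y) = (if \<exists>w. length w = l \<and> x = u @ w \<and> y = v @ w then 1 else 0)"
proof (induction l arbitrary: u v)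
  case 0
  then show ?case by (auto simp: delta_def)
next
  case (Suc l)
  let ?ext = "\<lambda>g. \<exists>w. length w = l \<and> x = (u @ [g]) @ w \<and> y = (v @ [g]) @ w"
  have "(\<exists>w. length w = Suc l \<and> x = u @ w \<and> y = v @ w) \<longleftrightarrow> ?ext G1 \<or> ?ext G2"
  proof
    assume "\<exists>w. length w = Suc l \<and> x = u @ w \<and> y = v @ w"
    then obtain g w where "length w = l" "x = u @ g # w" "y = v @ g # w"
      by (metis length_Suc_conv)
    then show "?ext G1 \<or> ?ext G2"
      using gen_cases[of g] by auto
  qed (metis append_Cons append_assoc length_Cons self_append_conv2)
  moreover have "\<not> (?ext G1 \<and> ?ext G2)"
    by auto
  ultimately show ?case
    using Suc[of "u @ [G1]" "v @ [G1]"] Suc[of "u @ [G2]" "v @ [G2]"]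
    by (auto simp del: append_assoc)
qed

section \<open>Harmonic functionals and the quotient norm\<close>

definition harmonic :: "(cu \<Rightarrow> complex) \<Rightarrow> bool" where
  "harmonic \<psi> \<longleftrightarrow> (\<forall>t. norm (\<psi> t) \<le> 1) \<and>
     (\<forall>u v. \<psi> (u, v) = \<psi> (u @ [G1], v @ [G1]) + \<psi> (u @ [G2], v @ [G2]))"

lemma harmonicD:
  "harmonic \<psi> \<Longrightarrow> \<psi> (u, v) = \<psi> (u @ [G1], v @ [G1]) + \<psi> (u @ [G2], v @ [G2])"
  "harmonic \<psi> \<Longrightarrow> norm (\<psi> t) \<le> 1"
  unfolding harmonic_def by blast+

definition prefix_of :: "gen list \<Rightarrow> gen list \<Rightarrow> bool" where
  "prefix_of b u \<longleftrightarrow> (\<exists>r. u = b @ r)"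

lemma prefix_of_append [simp]: "prefix_of b (b @ r)"
  by (simp add: prefix_of_def)

lemma prefix_of_snoc: "prefix_of b (u @ [g]) \<longleftrightarrow> prefix_of b u \<or> b = u @ [g]"
proof
  assume "prefix_of b (u @ [g])"
  then obtain r where r: "u @ [g] = b @ r" by (auto simp: prefix_of_def)
  then show "prefix_of b u \<or> b = u @ [g]"
    by (cases r rule: rev_cases) (auto simp: prefix_of_def)
qed (auto simp: prefix_of_def)

lemma prefix_of_appendD: "prefix_of (u @ w) b \<Longrightarrow> prefix_of u b"
  by (auto simp: prefix_of_def)

lemma translate_eq:
  "translate \<psi> (a, b) (u, v) = (if prefix_of b u then \<psi> (a @ drop (length b) u, v)
     else if prefix_of u b then \<psi> (a, v @ drop (length u) b) else 0)"
  by (auto simp: translate_def cu_mult_def prefix_of_def)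

lemma harmonic_translate_right:
  assumes h: "harmonic \<psi>"
  shows "harmonic (translate \<psi> s)"
  unfolding harmonic_def
proof (intro conjI allI)
  fix t
  show "norm (translate \<psi> s t) \<le> 1"
    using norm_translate_le harmonicD(2)[OF h] by blast
next
  fix u v
  obtain a b where s: "s = (a, b)" by force
  show "translate \<psi> s (u, v) = translate \<psi> s (u @ [G1], v @ [G1]) + translate \<psi> s (u @ [G2], v @ [G2])"
  proof (cases "prefix_of b u")
    case True
    then obtain r where r: "u = b @ r" by (auto simp: prefix_of_def)
    then show ?thesis
      using harmonicD(1)[OF h, of "a @ r" v] by (simp add: s translate_eq r)
  next
    case nb: False
    show ?thesis
    proof (cases "prefix_of u b")
      case True
      then obtain g0 r' where r: "b = u @ g0 # r'"
        using nb by (auto simp: prefix_of_def neq_Nil_conv)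
      have "translate \<psi> s (u @ [g], v @ [g]) = (if g = g0 then \<psi> (a, v @ g0 # r') else 0)" for g
        using r nb by (auto simp: s translate_eq prefix_of_snoc prefix_of_def)
      moreover have "translate \<psi> s (u, v) = \<psi> (a, v @ g0 # r')"
        using nb True r by (simp add: s translate_eq)
      ultimately show ?thesis
        by (cases g0) auto
    next
      case False
      then show ?thesis
        using nb by (auto simp: s translate_eq prefix_of_snoc dest: prefix_of_appendD)
    qed
  qed
qed

lemma harmonic_translate_left:
  assumes h: "harmonic \<psi>"
  shows "harmonic (\<lambda>s. translate \<psi> s t)"
  unfolding harmonic_def
proof (intro conjI allI)
  fix s
  show "norm (translate \<psi> s t) \<le> 1"
    using norm_translate_le harmonicD(2)[OF h] by blast
next
  fix a b
  obtain u v where t: "t = (u, v)" by force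
  show "translate \<psi> (a, b) t = translate \<psi> (a @ [G1], b @ [G1]) t + translate \<psi> (a @ [G2], b @ [G2]) t"
  proof (cases "prefix_of b u")
    case True
    then obtain r where r: "u = b @ r" by (auto simp: prefix_of_def)
    show ?thesis
    proof (cases r)
      case Nil
      then show ?thesis
        using r harmonicD(1)[OF h, of a v] by (simp add: t translate_eq prefix_of_def)
    next
      case (Cons g0 r')
      have "translate \<psi> (a @ [g], b @ [g]) t = (if g = g0 then \<psi> (a @ r, v) else 0)" for g
        using r Cons
        by (auto simp: t translate_eq prefix_of_def append_eq_append_conv2 Cons_eq_append_conv)
      moreover have "translate \<psi> (a, b) t = \<psi> (a @ r, v)"
        using r by (simp add: t translate_eq prefix_of_def)
      ultimately show ?thesis
        by (cases g0) auto
    qed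
  next
    case nb: False
    show ?thesis
    proof (cases "prefix_of u b")
      case True
      then obtain r where r: "b = u @ r" by (auto simp: prefix_of_def)
      then show ?thesis
        using nb harmonicD(1)[OF h, of a "v @ r"] by (simp add: t translate_eq prefix_of_def)
    next
      case False
      then show ?thesis
        using nb by (auto simp: t translate_eq prefix_of_snoc dest: prefix_of_appendD)
    qed
  qed
qed

definition annihilator :: "(cu \<Rightarrow> complex) set" where
  "annihilator = {f \<in> l1. \<forall>\<psi>. harmonic \<psi> \<longrightarrow> pairing \<psi> f = 0}"

lemma f0_in_annihilator: "f0 \<in> annihilator"
proof -
  have "pairing \<psi> f0 = 0" if h: "harmonic \<psi>" for \<psi>
    using harmonicD(1)[OF h, of "[]" "[]"]
    by (simp add: f0_def cu_e_def pairing_diff[OF _ _ harmonicD(2)[OF h]] pairing_delta)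
  then show ?thesis
    by (simp add: annihilator_def f0_def)
qed

lemma norm_pairing_le_norm1_diff:
  assumes a: "a \<in> l1" and g: "g \<in> annihilator" and h: "harmonic \<psi>"
  shows "norm (pairing \<psi> a) \<le> norm1 (a - g)"
proof -
  have g1: "g \<in> l1" "pairing \<psi> g = 0"
    using g h by (auto simp: annihilator_def)
  have "norm (pairing \<psi> a) = norm (pairing \<psi> (a - g))"
    using pairing_diff[OF a g1(1) harmonicD(2)[OF h]] g1(2) by simp
  also have "\<dots> \<le> norm1 (a - g)"
    by (rule norm_pairing_le) (use a g1 harmonicD(2)[OF h] in auto)
  finally show ?thesis .
qed

lemma annihilator_closed_ideal: "is_closed_ideal annihilator"
  unfolding is_closed_ideal_def
proof (intro conjI ballI allI impI)
  show "annihilator \<subseteq> l1" "0 \<in> annihilator"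
    by (auto simp: annihilator_def pairing_def)
next
  fix a b assume a: "a \<in> annihilator" and b: "b \<in> annihilator"
  have "pairing \<psi> (a + b) = 0" if h: "harmonic \<psi>" for \<psi>
    using a b h pairing_add[of a b \<psi>] harmonicD(2)[OF h] by (simp add: annihilator_def)
  then show "a + b \<in> annihilator"
    using a b by (simp add: annihilator_def)
next
  fix c :: complex and a assume "a \<in> annihilator"
  then show "(\<lambda>x. c * a x) \<in> annihilator"
    by (auto simp: annihilator_def pairing_scale)
next
  fix a b assume a: "a \<in> l1" and b: "b \<in> annihilator"
  have b1: "b \<in> l1"
    using b by (simp add: annihilator_def)
  have "pairing \<psi> (conv a b) = 0" if h: "harmonic \<psi>" for \<psi>
    using b harmonic_translate_right[OF h]
    by (simp add: pairing_conv_left[OF a b1 harmonicD(2)[OF h]] annihilator_def)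
  then show "conv a b \<in> annihilator"
    using conv_in_l1[OF a b1] by (simp add: annihilator_def)
  have "pairing \<psi> (conv b a) = 0" if h: "harmonic \<psi>" for \<psi>
    using b harmonic_translate_left[OF h]
    by (simp add: pairing_conv_right[OF b1 a harmonicD(2)[OF h]] annihilator_def)
  then show "conv b a \<in> annihilator"
    using conv_in_l1[OF b1 a] by (simp add: annihilator_def)
next
  fix f assume f: "f \<in> l1" and approx: "\<forall>e>0. \<exists>g\<in>annihilator. norm1 (f - g) < e"
  have "pairing \<psi> f = 0" if h: "harmonic \<psi>" for \<psi>
  proof (rule ccontr)
    assume "pairing \<psi> f \<noteq> 0"
    then obtain g where "g \<in> annihilator" "norm1 (f - g) < norm (pairing \<psi> f)"
      using approx by (meson zero_less_norm_iff)
    then show False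
      using norm_pairing_le_norm1_diff[OF f _ h] by fastforce
  qed
  then show "f \<in> annihilator"
    using f by (simp add: annihilator_def)
qed

lemma J_subset_annihilator: "J \<subseteq> annihilator"
  by (rule J_subset[OF annihilator_closed_ideal f0_in_annihilator])

lemma norm_pairing_le_qnorm:
  assumes a: "a \<in> l1" and h: "harmonic \<psi>"
  shows "norm (pairing \<psi> a) \<le> qnorm a"
  unfolding qnorm_def
proof (rule cInf_greatest)
  show "{norm1 (a - j) |j. j \<in> J} \<noteq> {}"
    using zero_in_J by blast
next
  fix r assume "r \<in> {norm1 (a - j) |j. j \<in> J}"
  then show "norm (pairing \<psi> a) \<le> r"
    using norm_pairing_le_norm1_diff[OF a _ h] J_subset_annihilator by blast
qed

definition unit_vec :: "nat \<Rightarrow> nat \<Rightarrow> complex" where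
  "unit_vec n = (\<lambda>i. if i = n then 1 else 0)"

lemma lpnorm_nonneg: "lpnorm p x \<ge> 0"
  unfolding lpnorm_def by simp

lemma norm_unit_vec_powr: "p > 0 \<Longrightarrow> (\<lambda>i. norm (unit_vec n i) powr p) = (\<lambda>i. if i = n then 1 else 0)"
  by (auto simp: unit_vec_def)

lemma unit_vec_in_lp: "p > 0 \<Longrightarrow> unit_vec n \<in> lp p"
  unfolding lp_def by (simp add: norm_unit_vec_powr summable_If_finite)

lemma lpnorm_unit_vec: "p > 0 \<Longrightarrow> lpnorm p (unit_vec n) = 1"
  unfolding lpnorm_def
  using suminf_finite[of "{n}" "\<lambda>i. if i = n then 1 else 0 :: real"]
  by (simp add: norm_unit_vec_powr)

lemma zero_in_lp: "p > 0 \<Longrightarrow> (0 :: nat \<Rightarrow> complex) \<in> lp p"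
  unfolding lp_def by simp

lemma norm_le_lpnorm:
  assumes p: "p > 0" and y: "y \<in> lp p"
  shows "norm (y m) \<le> lpnorm p y"
proof -
  have "norm (y m) powr p \<le> (\<Sum>n. norm (y n) powr p)"
    using sum_le_suminf[of "\<lambda>n. norm (y n) powr p" "{m}"] y by (simp add: lp_def)
  then have "(norm (y m) powr p) powr (1 / p) \<le> (\<Sum>n. norm (y n) powr p) powr (1 / p)"
    using p by (auto intro: powr_mono2)
  then show ?thesis
    using p by (simp add: powr_powr lpnorm_def)
qed

lemma lpnorm_le_opnorm:
  assumes T: "is_bop p T" and x: "x \<in> lp p" "lpnorm p x \<le> 1"
  shows "lpnorm p (T x) \<le> opnorm p T"
proof -
  obtain K where K: "\<forall>x\<in>lp p. lpnorm p (T x) \<le> K * lpnorm p x"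
    using T unfolding is_bop_def by blast
  have "bdd_above {lpnorm p (T x) | x. x \<in> lp p \<and> lpnorm p x \<le> 1}"
  proof (rule bdd_aboveI[of _ "\<bar>K\<bar>"])
    fix r assume "r \<in> {lpnorm p (T x) | x. x \<in> lp p \<and> lpnorm p x \<le> 1}"
    then obtain z where z: "z \<in> lp p" "lpnorm p z \<le> 1" "r = lpnorm p (T z)" by blast
    have "K * lpnorm p z \<le> \<bar>K\<bar> * lpnorm p z"
      by (simp add: lpnorm_nonneg mult_right_mono)
    also have "\<dots> \<le> \<bar>K\<bar>"
      using z(2) lpnorm_nonneg[of p z] by (simp add: mult_left_le)
    finally show "r \<le> \<bar>K\<bar>"
      using K z by force
  qed
  then show ?thesis
    unfolding opnorm_def using x by (auto intro!: cSup_upper)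
qed

lemma opnorm_le:
  assumes p: "p > 0" and "\<And>x. x \<in> lp p \<Longrightarrow> lpnorm p x \<le> 1 \<Longrightarrow> lpnorm p (T x) \<le> C"
  shows "opnorm p T \<le> C"
  unfolding opnorm_def
  by (rule cSup_least) (use assms zero_in_lp[OF p] in \<open>auto simp: lpnorm_def intro!: exI[of _ 0]\<close>)

lemma opnorm_cong: "(\<And>x. x \<in> lp p \<Longrightarrow> T x = T' x) \<Longrightarrow> opnorm p T = opnorm p T'"
  unfolding opnorm_def by metis

text \<open>\<open>Ai g\<close> reads the coordinates \<open>slot g k\<close>; \<open>embed g\<close> is the isometry \<open>S_g\<close> writing
  into them, a right inverse of \<open>Ai g\<close>.\<close>

definition slot :: "gen \<Rightarrow> nat \<Rightarrow> nat" where
  "slot g k = (case g of G1 \<Rightarrow> 2 * k + 1 | G2 \<Rightarrow> 2 * k)"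

definition embed :: "gen \<Rightarrow> (nat \<Rightarrow> complex) \<Rightarrow> nat \<Rightarrow> complex" where
  "embed g x = (\<lambda>i. if i \<in> range (slot g) then x (i div 2) else 0)"

lemma Ai_eq_slot: "Ai g x = (\<lambda>m. x (slot g m))"
  by (cases g) (auto simp: Ai_def A1_def A2_def slot_def)

lemma slot_div_2: "slot g k div 2 = k"
  by (cases g) (auto simp: slot_def)

lemma slot_inj: "slot g a = slot g b \<Longrightarrow> a = b"
  by (metis slot_div_2)

lemma slot_strict_mono: "strict_mono (slot g)"
  by (cases g) (auto simp: strict_mono_def slot_def)

lemma slot_disjoint: "g \<noteq> g' \<Longrightarrow> slot g k \<noteq> slot g' k'"
  by (cases g; cases g') (auto simp: slot_def, presburger+)

lemma embed_slot: "embed g x (slot g k) = x k"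
  by (auto simp: embed_def slot_div_2)

lemma Ai_embed: "Ai g (embed g x) = x"
  by (auto simp: Ai_eq_slot embed_slot)

lemma Ai_embed_other: "g \<noteq> g' \<Longrightarrow> Ai g' (embed g x) = 0"
  using slot_disjoint by (fastforce simp: Ai_eq_slot embed_def)

lemma embed_in_lp:
  assumes p: "p > 0" and x: "x \<in> lp p"
  shows "embed g x \<in> lp p"
proof -
  have "summable (\<lambda>n. norm (embed g x (slot g n)) powr p) \<longleftrightarrow> summable (\<lambda>i. norm (embed g x i) powr p)"
    by (rule summable_mono_reindex[OF slot_strict_mono]) (use p in \<open>auto simp: embed_def\<close>)
  then show ?thesis
    using x by (simp add: lp_def embed_slot)
qed

fun slot_word :: "gen list \<Rightarrow> nat \<Rightarrow> nat" where
  "slot_word [] k = k"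
| "slot_word (g # v) k = slot g (slot_word v k)"

fun embed_word :: "gen list \<Rightarrow> (nat \<Rightarrow> complex) \<Rightarrow> nat \<Rightarrow> complex" where
  "embed_word [] x = x"
| "embed_word (g # u) x = embed g (embed_word u x)"

lemma slot_word_inj: "slot_word u k = slot_word u k' \<Longrightarrow> k = k'"
  by (induction u) (auto dest: slot_inj)

lemma embed_word_slot_word: "embed_word u y (slot_word u k) = y k"
  by (induction u arbitrary: k) (auto simp: embed_slot)

lemma embed_word_outside: "m \<notin> range (slot_word u) \<Longrightarrow> embed_word u y m = 0"
proof (induction u arbitrary: m)
  case (Cons g u)
  show ?case
  proof (cases "m \<in> range (slot g)")
    case True
    then obtain j where j: "m = slot g j" by blast
    then have "j \<notin> range (slot_word u)"
      using Cons.prems by auto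
    then show ?thesis
      using Cons.IH j by (simp add: embed_slot)
  qed (simp add: embed_def)
qed simp

lemma embed_word_in_lp: "p > 0 \<Longrightarrow> y \<in> lp p \<Longrightarrow> embed_word u y \<in> lp p"
  by (induction u) (auto intro: embed_in_lp)

definition mean_op :: "(nat \<Rightarrow> complex) \<Rightarrow> nat \<Rightarrow> complex" where
  "mean_op x = (\<lambda>m. (x (2 * m + 1) + x (2 * m)) / 2)"

lemma powr_midpoint_le:
  fixes \<alpha> \<beta> p :: real
  assumes "\<alpha> \<ge> 0" "\<beta> \<ge> 0" "p \<ge> 1"
  shows "((\<alpha> + \<beta>) / 2) powr p \<le> (\<alpha> powr p + \<beta> powr p) / 2"
proof -
  have half: "(\<gamma> / 2) powr p \<le> \<gamma> powr p / 2" if "\<gamma> \<ge> 0" for \<gamma> :: real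
  proof -
    have "(2::real) \<le> 2 powr p"
      using powr_mono[of 1 p 2] assms(3) by simp
    then have "\<gamma> powr p / 2 powr p \<le> \<gamma> powr p / 2"
      by (rule divide_left_mono) auto
    then show ?thesis
      using that by (simp add: powr_divide)
  qed
  consider "\<alpha> = 0" | "\<beta> = 0" | "\<alpha> > 0" "\<beta> > 0"
    using assms by linarith
  then show ?thesis
  proof cases
    case 3
    have "((1 - 1/2) *\<^sub>R \<alpha> + (1/2) *\<^sub>R \<beta>) powr p \<le> (1 - 1/2) * \<alpha> powr p + (1/2) * \<beta> powr p"
      by (rule convex_onD[OF powr_convex[OF assms(3)]]) (use 3 in auto)
    then show ?thesis
      by (simp add: field_simps)
  qed (use half assms in auto)
qed

lemma mean_op_lp:
  assumes p: "p \<ge> 1" and x: "x \<in> lp p"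
  shows "mean_op x \<in> lp p" and "lpnorm p (mean_op x) \<le> (1/2) powr (1/p) * lpnorm p x"
proof -
  define h where "h = (\<lambda>i. norm (x i) powr p)"
  have "summable h"
    using x by (simp add: lp_def h_def)
  define q where "q = (\<lambda>m. (h (2 * m) + h (2 * m + 1)) / 2)"
  have "(\<lambda>m. \<Sum>i\<in>{m * 2..<m * 2 + 2}. h i) sums suminf h"
    using sums_group[OF summable_sums[OF \<open>summable h\<close>], of 2] by simp
  then have q_sums: "q sums (suminf h / 2)"
    unfolding q_def by (intro sums_divide) (simp add: mult.commute numeral_2_eq_2)
  have pointwise: "norm (mean_op x m) powr p \<le> q m" for m
  proof -
    have "norm (mean_op x m) \<le> (norm (x (2 * m + 1)) + norm (x (2 * m))) / 2"
      unfolding mean_op_def by (simp add: norm_divide norm_triangle_ineq divide_right_mono)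
    then have "norm (mean_op x m) powr p \<le> ((norm (x (2 * m + 1)) + norm (x (2 * m))) / 2) powr p"
      using p by (intro powr_mono2) auto
    also have "\<dots> \<le> (norm (x (2 * m + 1)) powr p + norm (x (2 * m)) powr p) / 2"
      by (rule powr_midpoint_le) (use p in auto)
    finally show ?thesis
      by (simp add: q_def h_def add.commute)
  qed
  have summ: "summable (\<lambda>m. norm (mean_op x m) powr p)"
    by (rule summable_comparison_test'[of q 0]) (use q_sums pointwise in \<open>auto simp: sums_iff\<close>)
  then show "mean_op x \<in> lp p"
    by (simp add: lp_def)
  have "(\<Sum>m. norm (mean_op x m) powr p) \<le> (1/2) * suminf h"
    using suminf_le[OF pointwise summ] q_sums by (simp add: sums_iff)
  then have "lpnorm p (mean_op x) \<le> ((1/2) * suminf h) powr (1/p)"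
    unfolding lpnorm_def using p summ by (intro powr_mono2) (auto intro: suminf_nonneg)
  also have "\<dots> = (1/2) powr (1/p) * lpnorm p x"
    using powr_mult[of "1/2" "suminf h" "1/p"] suminf_nonneg[OF \<open>summable h\<close>]
    by (simp add: lpnorm_def h_def)
  finally show "lpnorm p (mean_op x) \<le> (1/2) powr (1/p) * lpnorm p x" .
qed

lemma mean_op_funpow_lp:
  assumes p: "p \<ge> 1" and x: "x \<in> lp p"
  shows "(mean_op ^^ n) x \<in> lp p \<and> lpnorm p ((mean_op ^^ n) x) \<le> ((1/2) powr (1/p)) ^ n * lpnorm p x"
  using x
proof (induction n arbitrary: x)
  case (Suc n)
  have step: "mean_op x \<in> lp p" "lpnorm p (mean_op x) \<le> (1/2) powr (1/p) * lpnorm p x"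
    using mean_op_lp[OF p Suc.prems] by auto
  have "lpnorm p ((mean_op ^^ n) (mean_op x)) \<le> ((1/2) powr (1/p)) ^ n * lpnorm p (mean_op x)"
    using Suc.IH[OF step(1)] by blast
  also have "\<dots> \<le> ((1/2) powr (1/p)) ^ n * ((1/2) powr (1/p) * lpnorm p x)"
    by (rule mult_left_mono[OF step(2)]) simp
  finally have "lpnorm p ((mean_op ^^ n) (mean_op x)) \<le> ((1/2) powr (1/p)) ^ Suc n * lpnorm p x"
    by (simp add: mult_ac)
  moreover have "(mean_op ^^ Suc n) x = (mean_op ^^ n) (mean_op x)"
    by (simp only: funpow_Suc_right o_apply)
  ultimately show ?case
    using Suc.IH[OF step(1)] by simp
qed simp

section \<open>Vanishing matrix entries\<close>

lemma slot_word_append: "slot_word (a @ b) k = slot_word a (slot_word b k)"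
  by (induction a) auto

lemma slot_word_eq_prefix:
  "length u \<le> length x \<Longrightarrow> slot_word u k = slot_word x j \<Longrightarrow> \<exists>w. x = u @ w \<and> k = slot_word w j"
proof (induction u arbitrary: x)
  case (Cons g u)
  then obtain g' x' where x: "x = g' # x'"
    by (cases x) auto
  then have eq: "slot g (slot_word u k) = slot g' (slot_word x' j)"
    using Cons.prems by simp
  then have "g = g'"
    using slot_disjoint by blast
  with eq have "slot_word u k = slot_word x' j"
    using slot_inj by blast
  then show ?case
    using Cons.IH[of x'] Cons.prems x \<open>g = g'\<close> by auto
qed (simp flip: slot_word_append)

lemma slot_word_one_ge: "slot_word w 1 \<ge> 1"
  by (induction w) (auto simp: slot_def split: gen.splits)

lemma slot_word_eq_0: "slot_word w k = 0 \<Longrightarrow> k = 0"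
  by (induction w) (auto simp: slot_def split: gen.splits)

lemma slot_word_eq_1:
  assumes "w \<noteq> []" "slot_word w k = 1"
  shows "k = 0"
proof -
  obtain g w' where "w = g # w'" "slot g (slot_word w' k) = 1"
    using assms by (cases w) auto
  then have "slot_word w' k = 0"
    by (auto simp: slot_def split: gen.splits)
  then show "k = 0"
    by (rule slot_word_eq_0)
qed

text \<open>Coordinate \<open>1\<close> (not \<open>0\<close>, which is fixed by \<open>slot G2\<close>) identifies words.\<close>

lemma slot_word_one_inj:
  assumes "slot_word w 1 = slot_word w' 1"
  shows "w = w'"
proof -
  have *: "w = w'" if len: "length w \<le> length w'" and eq: "slot_word w 1 = slot_word w' 1" for w w'
  proof -
    obtain r where r: "w' = w @ r" "1 = slot_word r 1"
      using slot_word_eq_prefix[OF len eq] by blast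
    then have "r = []"
      using slot_word_eq_1[of r 1] by auto
    then show ?thesis
      using r by simp
  qed
  show ?thesis
    using *[of w w'] *[of w' w] assms by (cases "length w \<le> length w'") auto
qed

lemma slot_word_common_slot:
  assumes "slot_word u k = slot_word x 1" "slot_word v k = slot_word y 1"
  shows "(\<exists>w. x = u @ w \<and> y = v @ w) \<or>
    (length x < length u \<and> length y < length v \<and> x = take (length x) u \<and> y = take (length y) v)"
proof (cases "length u \<le> length x")
  case True
  then obtain w1 where w1: "x = u @ w1" "k = slot_word w1 1"
    using slot_word_eq_prefix assms(1) by blast
  show ?thesis
  proof (cases "length v \<le> length y")
    case True
    then obtain w2 where "y = v @ w2" "k = slot_word w2 1"
      using slot_word_eq_prefix assms(2) by blast
    then show ?thesis
      using w1 slot_word_one_inj by auto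
  next
    case False
    then obtain w2 where "v = y @ w2" "slot_word w2 k = 1" "w2 \<noteq> []"
      using slot_word_eq_prefix[of y v 1 k] assms(2) by auto
    then show ?thesis
      using w1 slot_word_one_ge[of w1] slot_word_eq_1 by fastforce
  qed
next
  case ux: False
  then obtain w1 where w1: "u = x @ w1" "slot_word w1 k = 1" "w1 \<noteq> []"
    using slot_word_eq_prefix[of x u 1 k] assms(1) by auto
  then have k0: "k = 0"
    using slot_word_eq_1 by blast
  show ?thesis
  proof (cases "length v \<le> length y")
    case True
    then obtain w2 where "y = v @ w2" "k = slot_word w2 1"
      using slot_word_eq_prefix assms(2) by blast
    then show ?thesis
      using k0 slot_word_one_ge[of w2] by simp
  next
    case False
    then obtain w2 where "v = y @ w2"
      using slot_word_eq_prefix[of y v 1 k] assms(2) by auto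
    then show ?thesis
      using w1 ux False by auto
  qed
qed

text \<open>\<open>op_entry n m t\<close> will turn out to be the \<open>(m, n)\<close> matrix entry of \<open>\<Theta>(\<delta> t)\<close>.\<close>

definition op_entry :: "nat \<Rightarrow> nat \<Rightarrow> cu \<Rightarrow> complex" where
  "op_entry n m t = (if \<exists>k. slot_word (fst t) k = m \<and> slot_word (snd t) k = n then 1 else 0)"

lemma norm_op_entry_le: "norm (op_entry n m t) \<le> 1"
  by (simp add: op_entry_def)

definition depth :: "cu \<Rightarrow> nat" where
  "depth t = min (length (fst t)) (length (snd t))"

definition lag_le :: "nat \<Rightarrow> cu \<Rightarrow> bool" where
  "lag_le K t \<longleftrightarrow> length (fst t) \<le> length (snd t) + K \<and> length (snd t) \<le> length (fst t) + K"

definition shallow :: "nat \<Rightarrow> nat \<Rightarrow> cu set" where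
  "shallow N K = {t. depth t \<le> N \<and> lag_le K t}"

definition level :: "nat \<Rightarrow> nat \<Rightarrow> cu set" where
  "level N K = {t. depth t = N \<and> lag_le K t}"

definition level_coeff :: "cu \<Rightarrow> cu \<Rightarrow> complex" where
  "level_coeff s = op_entry (slot_word (snd s) 1) (slot_word (fst s) 1)"

lemma norm_level_coeff_le: "norm (level_coeff s t) \<le> 1"
  by (simp add: level_coeff_def norm_op_entry_le)

lemma finite_words: "finite {xs :: gen list. length xs \<le> n}"
proof -
  have "(UNIV :: gen set) = {G1, G2}"
    using gen.exhaust by auto
  then have "finite (UNIV :: gen set)"
    by (metis finite.emptyI finite_insert)
  then show ?thesis
    using finite_lists_length_le[of "UNIV :: gen set" n] by simp
qed

lemma shallow_finite: "finite (shallow N K)"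
proof (rule finite_subset)
  show "shallow N K \<subseteq> {xs. length xs \<le> N + K} \<times> {xs. length xs \<le> N + K}"
    by (auto simp: shallow_def depth_def lag_le_def min_def split: if_splits)
qed (intro finite_cartesian_product finite_words)

lemma level_finite: "finite (level N K)"
  by (rule finite_subset[OF _ shallow_finite[of N K]]) (auto simp: level_def shallow_def)

lemma level_coeff_shallow:
  assumes t: "t \<in> shallow N K" and s: "s \<in> level N K"
  shows "level_coeff s t = refine (N - depth t) t s"
proof -
  obtain u v x y where tt: "t = (u, v)" and ss: "s = (x, y)"
    by force
  have "(\<exists>k. slot_word u k = slot_word x 1 \<and> slot_word v k = slot_word y 1) \<longleftrightarrow>
        (\<exists>w. length w = N - depth t \<and> x = u @ w \<and> y = v @ w)"
  proof
    assume "\<exists>k. slot_word u k = slot_word x 1 \<and> slot_word v k = slot_word y 1"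
    then obtain k where "slot_word u k = slot_word x 1" "slot_word v k = slot_word y 1"
      by blast
    from slot_word_common_slot[OF this]
    show "\<exists>w. length w = N - depth t \<and> x = u @ w \<and> y = v @ w"
    proof
      assume "\<exists>w. x = u @ w \<and> y = v @ w"
      then obtain w where w: "x = u @ w" "y = v @ w"
        by blast
      then have "depth s = depth t + length w"
        using tt ss by (simp add: depth_def)
      then show ?thesis
        using w s by (auto simp: level_def)
    next
      assume "length x < length u \<and> length y < length v \<and> x = take (length x) u \<and> y = take (length y) v"
      then have "depth t > depth s"
        using tt ss by (auto simp: depth_def)
      then show ?thesis
        using t s by (auto simp: level_def shallow_def)
    qed
  next
    assume "\<exists>w. length w = N - depth t \<and> x = u @ w \<and> y = v @ w"
    then show "\<exists>k. slot_word u k = slot_word x 1 \<and> slot_word v k = slot_word y 1"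
      by (auto simp: slot_word_append)
  qed
  then show ?thesis
    by (simp add: level_coeff_def op_entry_def refine_eq tt ss)
qed

lemma level_coeff_nonzero:
  assumes t: "t \<notin> shallow N K" and s: "s \<in> level N K" and c: "level_coeff s t \<noteq> 0"
  shows "N < depth t \<and> fst s = take (length (fst s)) (fst t) \<and> snd s = take (length (snd s)) (snd t)"
proof -
  obtain u v x y where tt: "t = (u, v)" and ss: "s = (x, y)"
    by force
  obtain k where "slot_word u k = slot_word x 1" "slot_word v k = slot_word y 1"
    using c by (auto simp: level_coeff_def op_entry_def tt ss split: if_splits)
  from slot_word_common_slot[OF this] show ?thesis
  proof
    assume "\<exists>w. x = u @ w \<and> y = v @ w"
    then have "t \<in> shallow N K"
      using s tt ss by (auto simp: level_def shallow_def depth_def lag_le_def)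
    then show ?thesis
      using t by simp
  next
    assume "length x < length u \<and> length y < length v \<and> x = take (length x) u \<and> y = take (length y) v"
    then show ?thesis
      using s tt ss by (auto simp: level_def depth_def)
  qed
qed

text \<open>Outside \<open>shallow N K\<close>, the column \<open>t\<close> meets \<open>level N K\<close> only in prefixes of \<open>t\<close>
  whose lengths are pinned down up to \<open>2K + 2\<close> choices.\<close>

lemma card_level_coeff_support_le:
  assumes t: "t \<notin> shallow N K"
  shows "card {s \<in> level N K. level_coeff s t \<noteq> 0} \<le> 2 * K + 2"
proof -
  define L where "L = ({N} \<times> {N..N + K}) \<union> ({N..N + K} \<times> {N})"
  have "finite L"
    by (simp add: L_def)
  have "card L \<le> card ({N} \<times> {N..N + K}) + card ({N..N + K} \<times> {N})"
    unfolding L_def by (rule card_Un_le)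
  then have card_L: "card L \<le> 2 * K + 2"
    by (simp add: card_cartesian_product)
  have "{s \<in> level N K. level_coeff s t \<noteq> 0} \<subseteq> (\<lambda>(i, j). (take i (fst t), take j (snd t))) ` L"
  proof
    fix s assume "s \<in> {s \<in> level N K. level_coeff s t \<noteq> 0}"
    then have s: "s \<in> level N K" "level_coeff s t \<noteq> 0"
      by auto
    have "(length (fst s), length (snd s)) \<in> L"
      using s(1) by (auto simp: L_def level_def depth_def lag_le_def min_def split: if_splits)
    then show "s \<in> (\<lambda>(i, j). (take i (fst t), take j (snd t))) ` L"
      using level_coeff_nonzero[OF t s]
      by (auto intro!: image_eqI[of _ _ "(length (fst s), length (snd s))"] prod_eqI)
  qed
  then have "card {s \<in> level N K. level_coeff s t \<noteq> 0} \<le> card ((\<lambda>(i, j). (take i (fst t), take j (snd t))) ` L)"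
    by (rule card_mono[OF finite_imageI[OF \<open>finite L\<close>]])
  also have "\<dots> \<le> card L"
    by (rule card_image_le[OF \<open>finite L\<close>])
  finally show ?thesis
    using card_L by simp
qed

lemma sum_level_coeff_le:
  assumes t: "t \<notin> shallow N K"
  shows "(\<Sum>s\<in>level N K. norm (level_coeff s t)) \<le> (if N < depth t then 2 * real K + 2 else 0)"
proof -
  define Z where "Z = {s \<in> level N K. level_coeff s t \<noteq> 0}"
  have "(\<Sum>s\<in>level N K. norm (level_coeff s t)) = (\<Sum>s\<in>Z. norm (level_coeff s t))"
    by (rule sum.mono_neutral_right) (auto simp: Z_def level_finite)
  also have "\<dots> \<le> card Z"
    using sum_mono[of Z "\<lambda>s. norm (level_coeff s t)" "\<lambda>_. 1"] norm_level_coeff_le by simp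
  finally have le: "(\<Sum>s\<in>level N K. norm (level_coeff s t)) \<le> card Z" .
  show ?thesis
  proof (cases "N < depth t")
    case True
    then show ?thesis
      using le card_level_coeff_support_le[OF t] by (simp add: Z_def)
  next
    case False
    then have "Z = {}"
      using level_coeff_nonzero[OF t] by (auto simp: Z_def)
    then show ?thesis
      using le False by simp
  qed
qed

lemma refine_outside_level:
  assumes "s \<notin> level N K" "t \<in> shallow N K"
  shows "refine (N - depth t) t s = 0"
proof -
  obtain u v x y where tt: "t = (u, v)" and ss: "s = (x, y)"
    by force
  have "\<not> (\<exists>w. length w = N - depth t \<and> x = u @ w \<and> y = v @ w)"
  proof
    assume "\<exists>w. length w = N - depth t \<and> x = u @ w \<and> y = v @ w"
    then obtain w where w: "length w = N - depth t" "x = u @ w" "y = v @ w"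
      by blast
    then have "s \<in> level N K"
      using assms(2) tt ss by (auto simp: level_def shallow_def lag_le_def depth_def)
    then show False
      using assms(1) by simp
  qed
  then show ?thesis
    by (simp add: refine_eq tt ss)
qed

text \<open>Refining every \<open>\<delta> t\<close>, \<open>t \<in> shallow N K\<close>, down to depth \<open>N\<close> turns the
  truncation of \<open>a\<close> into a function on \<open>level N K\<close>, congruent to it modulo J.\<close>

definition residual :: "(cu \<Rightarrow> complex) \<Rightarrow> nat \<Rightarrow> nat \<Rightarrow> cu \<Rightarrow> complex" where
  "residual a N K = (\<lambda>s. \<Sum>t\<in>shallow N K. a t * refine (N - depth t) t s)"

lemma truncate_minus_residual_in_J: "truncate (shallow N K) a - residual a N K \<in> J"
proof -
  have "truncate (shallow N K) a - residual a N K =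
      (\<Sum>t\<in>shallow N K. (\<lambda>s. a t * (delta t - refine (N - depth t) t) s))"
    by (simp add: truncate_eq_sum_delta[OF shallow_finite] residual_def fun_eq_iff sum_apply
        right_diff_distrib sum_subtractf)
  also have "\<dots> \<in> J"
    by (intro J_sum[OF shallow_finite] J_scale delta_minus_refine_in_J)
  finally show ?thesis .
qed

lemma residual_outside_level: "s \<notin> level N K \<Longrightarrow> residual a N K s = 0"
  by (simp add: residual_def refine_outside_level)

lemma residual_in_l1: "residual a N K \<in> l1"
proof (rule l1_finite_support)
  show "finite {s. residual a N K s \<noteq> 0}"
    by (rule finite_subset[OF _ level_finite[of N K]]) (use residual_outside_level in blast)
qed

lemma norm_residual_le:
  assumes a: "a \<in> l1" and s: "s \<in> level N K" and zero: "pairing (level_coeff s) a = 0"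
  shows "norm (residual a N K s) \<le> infsum (\<lambda>t. norm (a t) * norm (level_coeff s t)) (- shallow N K)"
proof -
  have summable: "(\<lambda>t. a t * level_coeff s t) summable_on A" for A
    by (rule bounded_mult_summable_on[OF a norm_level_coeff_le])
  have "0 = infsum (\<lambda>t. a t * level_coeff s t) (shallow N K) + infsum (\<lambda>t. a t * level_coeff s t) (- shallow N K)"
    using zero infsum_Un_disjoint[OF summable summable, of "shallow N K" "- shallow N K"]
    by (simp add: pairing_def Compl_partition)
  moreover have "residual a N K s = infsum (\<lambda>t. a t * level_coeff s t) (shallow N K)"
    using s shallow_finite by (simp add: residual_def level_coeff_shallow)
  ultimately have "norm (residual a N K s) = norm (infsum (\<lambda>t. a t * level_coeff s t) (- shallow N K))"
    by (metis add_eq_0_iff norm_minus_cancel)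
  also have "\<dots> \<le> infsum (\<lambda>t. norm (a t * level_coeff s t)) (- shallow N K)"
    by (rule norm_infsum_bound) (rule bounded_mult_norm_summable_on[OF a norm_level_coeff_le])
  finally show ?thesis
    by (simp add: norm_mult)
qed

lemma summable_on_sum:
  fixes f :: "'i \<Rightarrow> 'a \<Rightarrow> 'b::topological_comm_monoid_add"
  shows "finite S \<Longrightarrow> (\<And>i. i \<in> S \<Longrightarrow> f i summable_on A) \<Longrightarrow>
    (\<lambda>x. \<Sum>i\<in>S. f i x) summable_on A"
  by (induction S rule: finite_induct) (auto intro: summable_on_add)

lemma infsum_sum:
  fixes f :: "'i \<Rightarrow> 'a \<Rightarrow> 'b::{topological_comm_monoid_add, t2_space}"
  shows "finite S \<Longrightarrow> (\<And>i. i \<in> S \<Longrightarrow> f i summable_on A) \<Longrightarrow>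
    infsum (\<lambda>x. \<Sum>i\<in>S. f i x) A = (\<Sum>i\<in>S. infsum (f i) A)"
  by (induction S rule: finite_induct) (auto simp: infsum_add summable_on_sum)

lemma norm1_residual_le:
  assumes a: "a \<in> l1" and zero: "\<And>s. pairing (level_coeff s) a = 0"
  shows "norm1 (residual a N K) \<le> (2 * real K + 2) * infsum (\<lambda>t. norm (a t)) {t. N < depth t}"
proof -
  define c where "c = 2 * real K + 2"
  let ?g = "\<lambda>s t. norm (a t) * norm (level_coeff s t)"
  have summable: "?g s summable_on A" for s A
    using bounded_mult_norm_summable_on[OF a norm_level_coeff_le] by (simp add: norm_mult)
  have "norm1 (residual a N K) = (\<Sum>s\<in>level N K. norm (residual a N K s))"
    by (rule norm1_finite_support[OF level_finite residual_outside_level])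
  also have "\<dots> \<le> (\<Sum>s\<in>level N K. infsum (?g s) (- shallow N K))"
    by (rule sum_mono) (rule norm_residual_le[OF a _ zero])
  also have "\<dots> = infsum (\<lambda>t. \<Sum>s\<in>level N K. ?g s t) (- shallow N K)"
    by (rule infsum_sum[symmetric, OF level_finite summable])
  also have "\<dots> \<le> infsum (\<lambda>t. if N < depth t then c * norm (a t) else 0) (- shallow N K)"
  proof (rule infsum_mono)
    show "(\<lambda>t. \<Sum>s\<in>level N K. ?g s t) summable_on - shallow N K"
      by (rule summable_on_sum[OF level_finite summable])
    show "(\<lambda>t. if N < depth t then c * norm (a t) else 0) summable_on - shallow N K"
      by (rule summable_on_comparison_test[OF summable_on_cmult_right[OF l1_norm_summable_on[OF a]]])
         (auto simp: c_def)
  next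
    fix t assume "t \<in> - shallow N K"
    then have "norm (a t) * (\<Sum>s\<in>level N K. norm (level_coeff s t)) \<le>
        norm (a t) * (if N < depth t then c else 0)"
      using sum_level_coeff_le[of t N K] by (intro mult_left_mono) (auto simp: c_def)
    then show "(\<Sum>s\<in>level N K. ?g s t) \<le> (if N < depth t then c * norm (a t) else 0)"
      by (cases "N < depth t") (simp_all add: sum_distrib_left mult.commute)
  qed
  also have "\<dots> = infsum (\<lambda>t. c * norm (a t)) {t. N < depth t}"
    by (rule infsum_cong_neutral) (auto simp: shallow_def)
  also have "\<dots> = c * infsum (\<lambda>t. norm (a t)) {t. N < depth t}"
    by (rule infsum_cmult_right) (rule l1_norm_summable_on[OF a])
  finally show ?thesis
    by (simp add: c_def)
qed

lemma norm1_diff_refined_truncation_le: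
  assumes a: "a \<in> l1" and zero: "\<And>s. pairing (level_coeff s) a = 0"
  shows "norm1 (a - (truncate (shallow N K) a - residual a N K))
    \<le> infsum (\<lambda>t. norm (a t)) (- shallow N K)
      + (2 * real K + 2) * infsum (\<lambda>t. norm (a t)) {t. N < depth t}"
proof -
  have "norm1 (a - (truncate (shallow N K) a - residual a N K))
      \<le> norm1 (a - truncate (shallow N K) a) + norm1 (residual a N K)"
    using norm1_triangle[of "a - truncate (shallow N K) a" "residual a N K"] a
    by (simp add: truncate_in_l1 shallow_finite residual_in_l1 algebra_simps)
  moreover have "norm1 (a - truncate (shallow N K) a) = infsum (\<lambda>t. norm (a t)) (- shallow N K)"
    by (simp add: norm1_minus_commute[of a] norm1_truncate_diff)
  ultimately show ?thesis
    using norm1_residual_le[OF a zero, of N K] by linarith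
qed

lemma in_J_if_level_coeffs_vanish:
  assumes a: "a \<in> l1" and zero: "\<And>s. pairing (level_coeff s) a = 0"
  shows "a \<in> J"
proof (rule J_closed[OF a])
  fix e :: real assume e: "e > 0"
  obtain F1 where F1: "finite F1" "infsum (\<lambda>t. norm (a t)) (- F1) < e / 2"
    using l1_tail_small[OF a, of "e / 2"] e by auto
  define K where "K = (\<Sum>t\<in>F1. length (fst t) + length (snd t))"
  define c where "c = 2 * real K + 2"
  have "c > 0"
    by (simp add: c_def)
  obtain F2 where F2: "finite F2" "infsum (\<lambda>t. norm (a t)) (- F2) < e / (2 * c)"
    using l1_tail_small[OF a, of "e / (2 * c)"] e by (auto simp: c_def)
  define N where "N = (\<Sum>t\<in>F1 \<union> F2. length (fst t) + length (snd t))"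
  have le_N: "length (fst t) + length (snd t) \<le> N" if "t \<in> F1 \<union> F2" for t
    unfolding N_def using that F1(1) F2(1) by (intro member_le_sum) auto
  have "F1 \<subseteq> shallow N K"
  proof
    fix t assume t: "t \<in> F1"
    have "length (fst t) + length (snd t) \<le> K"
      unfolding K_def using F1(1) t by (intro member_le_sum) auto
    then show "t \<in> shallow N K"
      using le_N[of t] t by (auto simp: shallow_def depth_def lag_le_def)
  qed
  then have "infsum (\<lambda>t. norm (a t)) (- shallow N K) < e / 2"
    using l1_tail_mono[OF a, of "- shallow N K" "- F1"] F1(2) by simp
  moreover have "c * infsum (\<lambda>t. norm (a t)) {t. N < depth t} < e / 2"
  proof -
    have "{t. N < depth t} \<subseteq> - F2"
      using le_N by (fastforce simp: depth_def)
    then have "c * infsum (\<lambda>t. norm (a t)) {t. N < depth t} \<le> c * infsum (\<lambda>t. norm (a t)) (- F2)"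
      using \<open>c > 0\<close> by (intro mult_left_mono l1_tail_mono[OF a]) auto
    also have "\<dots> < e / 2"
      using F2(2) \<open>c > 0\<close> by (simp add: field_simps)
    finally show ?thesis .
  qed
  ultimately have "norm1 (a - (truncate (shallow N K) a - residual a N K)) < e"
    using norm1_diff_refined_truncation_le[OF a zero, of N K] by (simp add: c_def)
  then show "\<exists>g\<in>J. norm1 (a - g) < e"
    using truncate_minus_residual_in_J by blast
qed

section \<open>Powers of the mean of the two co-isometries\<close>

definition weight :: "cu \<Rightarrow> complex" where
  "weight t = of_real ((1/2) ^ length (fst t))"

lemma harmonic_weight: "harmonic weight"
  unfolding harmonic_def weight_def by (auto simp: norm_power power_le_one)

definition mean_gen :: "cu \<Rightarrow> complex" where
  "mean_gen = (\<lambda>s. (1/2) * delta ([], [G1]) s) + (\<lambda>s. (1/2) * delta ([], [G2]) s)"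

lemma mean_gen_in_l1: "mean_gen \<in> l1"
  unfolding mean_gen_def by (intro l1_add l1_scale delta_in_l1)

fun mean_pow :: "nat \<Rightarrow> cu \<Rightarrow> complex" where
  "mean_pow 0 = delta ([], [])"
| "mean_pow (Suc n) = conv (mean_pow n) mean_gen"

lemma mean_pow_in_l1: "mean_pow n \<in> l1"
  by (induction n) (auto intro: conv_in_l1 mean_gen_in_l1)

lemma pairing_translate_weight_mean_gen: "pairing (translate weight s) mean_gen = weight s"
proof -
  obtain x y where s: "s = (x, y)" by force
  have bound: "norm (translate weight s t) \<le> 1" for t
    using harmonic_translate_right[OF harmonic_weight] harmonicD(2) by blast
  have "pairing (translate weight s) mean_gen =
      (1/2) * translate weight s ([], [G1]) + (1/2) * translate weight s ([], [G2])"
    unfolding mean_gen_def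
    by (simp only: pairing_add[OF l1_scale[OF delta_in_l1] l1_scale[OF delta_in_l1] bound]
        pairing_scale pairing_delta)
  also have "\<dots> = weight s"
    by (simp add: s translate_def cu_mult_coisometry_right weight_def)
  finally show ?thesis .
qed

lemma pairing_weight_mean_pow: "pairing weight (mean_pow n) = 1"
proof (induction n)
  case 0
  then show ?case by (simp add: pairing_delta weight_def)
next
  case (Suc n)
  have "pairing weight (mean_pow (Suc n)) = infsum (\<lambda>s. mean_pow n s * weight s) UNIV"
    using pairing_conv_left[OF mean_pow_in_l1 mean_gen_in_l1 harmonicD(2)[OF harmonic_weight]]
    by (simp add: pairing_translate_weight_mean_gen)
  then show ?case
    using Suc by (simp add: pairing_def)
qed

lemma qnorm_mean_pow_ge: "qnorm (mean_pow n) \<ge> 1"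
  using norm_pairing_le_qnorm[OF mean_pow_in_l1 harmonic_weight, of n] pairing_weight_mean_pow by simp

section \<open>The representation\<close>

locale cu_rep =
  fixes p :: real
    and \<Theta> :: "(cu \<Rightarrow> complex) set \<Rightarrow> (nat \<Rightarrow> complex) \<Rightarrow> nat \<Rightarrow> complex"
  assumes p: "p \<ge> 1"
    and bop: "\<forall>X\<in>quot. is_bop p (\<Theta> X)"
    and hom_add: "\<forall>a\<in>l1. \<forall>b\<in>l1. \<forall>x\<in>lp p.
        \<Theta> (qmap (a + b)) x = \<Theta> (qmap a) x + \<Theta> (qmap b) x"
    and hom_scal: "\<forall>c::complex. \<forall>a\<in>l1. \<forall>x\<in>lp p.
        \<Theta> (qmap (\<lambda>s. c * a s)) x = (\<lambda>n. c * \<Theta> (qmap a) x n)"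
    and hom_mult: "\<forall>a\<in>l1. \<forall>b\<in>l1. \<forall>x\<in>lp p.
        \<Theta> (qmap (conv a b)) x = \<Theta> (qmap a) (\<Theta> (qmap b) x)"
    and cont: "\<forall>a\<in>l1. \<forall>e>0. \<exists>d>0. \<forall>b\<in>l1.
        qnorm (b - a) < d \<longrightarrow> opnorm p (\<lambda>x. \<Theta> (qmap b) x - \<Theta> (qmap a) x) < e"
    and gens: "\<forall>i. \<forall>x\<in>lp p. \<Theta> (qmap (delta (cu_star i))) x = Ai i x"
begin

lemma p_pos: "p > 0"
  using p by simp

lemma rep_bop: "a \<in> l1 \<Longrightarrow> is_bop p (\<Theta> (qmap a))"
  using bop by (simp add: quot_def)

lemma rep_in_lp: "a \<in> l1 \<Longrightarrow> x \<in> lp p \<Longrightarrow> \<Theta> (qmap a) x \<in> lp p"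
  using rep_bop unfolding is_bop_def by blast

lemma rep_add:
  "a \<in> l1 \<Longrightarrow> b \<in> l1 \<Longrightarrow> x \<in> lp p \<Longrightarrow>
    \<Theta> (qmap (a + b)) x = \<Theta> (qmap a) x + \<Theta> (qmap b) x"
  using hom_add by blast

lemma rep_scale:
  "a \<in> l1 \<Longrightarrow> x \<in> lp p \<Longrightarrow> \<Theta> (qmap (\<lambda>s. c * a s)) x = (\<lambda>n. c * \<Theta> (qmap a) x n)"
  using hom_scal by blast

lemma rep_mult:
  "a \<in> l1 \<Longrightarrow> b \<in> l1 \<Longrightarrow> x \<in> lp p \<Longrightarrow>
    \<Theta> (qmap (conv a b)) x = \<Theta> (qmap a) (\<Theta> (qmap b) x)"
  using hom_mult by blast

lemma rep_zero_vec:
  assumes "a \<in> l1"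
  shows "\<Theta> (qmap a) 0 = 0"
proof -
  have "\<Theta> (qmap a) (\<lambda>n. 0 * (0 :: nat \<Rightarrow> complex) n) = (\<lambda>n. 0 * \<Theta> (qmap a) 0 n)"
    using rep_bop[OF assms] zero_in_lp[OF p_pos] unfolding is_bop_def by blast
  then show ?thesis
    by (simp add: zero_fun_def)
qed

lemma rep_zero:
  assumes "x \<in> lp p"
  shows "\<Theta> (qmap 0) x = 0"
  using rep_scale[OF zero_in_l1 assms, of 0] by (simp add: zero_fun_def)

lemma rep_J: "j \<in> J \<Longrightarrow> x \<in> lp p \<Longrightarrow> \<Theta> (qmap j) x = 0"
  using qmap_eqI[of j 0] rep_zero by simp

lemma rep_diff:
  "a \<in> l1 \<Longrightarrow> b \<in> l1 \<Longrightarrow> x \<in> lp p \<Longrightarrow>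
    \<Theta> (qmap (a - b)) x = \<Theta> (qmap a) x - \<Theta> (qmap b) x"
  using rep_add[of "a - b" b x] by simp

lemma rep_sum:
  assumes "finite F" "\<And>t. t \<in> F \<Longrightarrow> f t \<in> l1" "x \<in> lp p"
  shows "\<Theta> (qmap (sum f F)) x = (\<Sum>t\<in>F. \<Theta> (qmap (f t)) x)"
  using assms
proof (induction F rule: finite_induct)
  case empty
  then show ?case using rep_zero[of x] by (simp add: zero_fun_def)
next
  case (insert t F)
  then have "\<Theta> (qmap (f t + sum f F)) x = \<Theta> (qmap (f t)) x + (\<Sum>t\<in>F. \<Theta> (qmap (f t)) x)"
    using rep_add[of "f t" "sum f F" x] l1_sum[of F f] by simp
  then show ?case
    by (simp only: sum.insert[OF insert(1,2)])
qed

lemma rep_gen: "x \<in> lp p \<Longrightarrow> \<Theta> (qmap (delta ([], [g]))) x = Ai g x"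
  using gens by (simp add: cu_star_def)

lemma Ai_in_lp: "x \<in> lp p \<Longrightarrow> Ai g x \<in> lp p"
  using rep_gen rep_in_lp[OF delta_in_l1] by metis

lemma rep_unit:
  assumes x: "x \<in> lp p"
  shows "\<Theta> (qmap (delta ([], []))) x = x"
proof -
  have "conv (delta ([], [])) (delta ([], [G1])) = delta ([], [G1])"
    by (simp add: conv_delta_delta cu_mult_coisometry_right)
  then have "\<Theta> (qmap (delta ([], []))) (Ai G1 (embed G1 x)) = Ai G1 (embed G1 x)"
    using rep_mult[OF delta_in_l1 delta_in_l1 embed_in_lp[OF p_pos x], of "([], [])" "([], [G1])"]
      rep_gen[OF embed_in_lp[OF p_pos x]] by simp
  then show ?thesis
    by (simp add: Ai_embed)
qed

lemma rep_coisometry: "x \<in> lp p \<Longrightarrow> \<Theta> (qmap (delta ([], v))) x = (\<lambda>m. x (slot_word v m))"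
proof (induction v arbitrary: x)
  case Nil
  then show ?case using rep_unit by simp
next
  case (Cons g v)
  have "conv (delta ([], v)) (delta ([], [g])) = delta ([], g # v)"
    by (simp add: conv_delta_delta cu_mult_coisometry_right)
  then have "\<Theta> (qmap (delta ([], g # v))) x = \<Theta> (qmap (delta ([], v))) (Ai g x)"
    using rep_mult[OF delta_in_l1 delta_in_l1 Cons.prems, of "([], v)" "([], [g])"] Cons.prems rep_gen
    by simp
  then show ?case
    using Cons.IH Ai_in_lp Cons.prems by (simp add: Ai_eq_slot)
qed

lemma rep_cuntz_decomposition:
  assumes x: "x \<in> lp p"
  shows "x = \<Theta> (qmap (delta ([G1], []))) (Ai G1 x) + \<Theta> (qmap (delta ([G2], []))) (Ai G2 x)"
proof -
  have split: "\<Theta> (qmap (delta ([g], [g]))) x = \<Theta> (qmap (delta ([g], []))) (Ai g x)" for g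
  proof -
    have "conv (delta ([g], [])) (delta ([], [g])) = delta ([g], [g])"
      by (simp add: conv_delta_delta cu_mult_isometry_left)
    then show ?thesis
      using rep_mult[OF delta_in_l1 delta_in_l1 x, of "([g], [])" "([], [g])"] x rep_gen by simp
  qed
  have f0: "f0 \<in> l1"
    by (simp add: f0_def)
  have "delta ([], []) = f0 + (delta ([G1], [G1]) + delta ([G2], [G2]))"
    by (simp add: f0_def cu_e_def)
  then have "x = \<Theta> (qmap f0) x + (\<Theta> (qmap (delta ([G1], [G1]))) x + \<Theta> (qmap (delta ([G2], [G2]))) x)"
    using rep_unit[OF x] rep_add[OF f0 _ x] rep_add[OF delta_in_l1 delta_in_l1 x] by simp
  then show ?thesis
    using rep_J[OF f0_in_J x] split by simp
qed

lemma rep_isometry_gen: "x \<in> lp p \<Longrightarrow> \<Theta> (qmap (delta ([g], []))) x = embed g x"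
  using rep_cuntz_decomposition[OF embed_in_lp[OF p_pos], of x g]
  by (cases g) (auto simp: Ai_embed Ai_embed_other rep_zero_vec)

lemma rep_isometry: "x \<in> lp p \<Longrightarrow> \<Theta> (qmap (delta (u, []))) x = embed_word u x"
proof (induction u arbitrary: x)
  case Nil
  then show ?case using rep_unit by simp
next
  case (Cons g u)
  have "conv (delta ([g], [])) (delta (u, [])) = delta (g # u, [])"
    by (simp add: conv_delta_delta cu_mult_isometry_left)
  then have "\<Theta> (qmap (delta (g # u, []))) x = \<Theta> (qmap (delta ([g], []))) (\<Theta> (qmap (delta (u, []))) x)"
    using rep_mult[OF delta_in_l1 delta_in_l1 Cons.prems, of "([g], [])" "(u, [])"] by simp
  then show ?case
    using Cons rep_isometry_gen embed_word_in_lp p_pos by simp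
qed

lemma rep_delta: "x \<in> lp p \<Longrightarrow> \<Theta> (qmap (delta (u, v))) x = embed_word u (\<lambda>m. x (slot_word v m))"
proof -
  assume x: "x \<in> lp p"
  have "conv (delta (u, [])) (delta ([], v)) = delta (u, v)"
    by (simp add: conv_delta_delta cu_mult_isometry_left)
  then have "\<Theta> (qmap (delta (u, v))) x = \<Theta> (qmap (delta (u, []))) (\<Theta> (qmap (delta ([], v))) x)"
    using rep_mult[OF delta_in_l1 delta_in_l1 x, of "(u, [])" "([], v)"] by simp
  then show ?thesis
    using rep_isometry rep_coisometry x rep_in_lp[OF delta_in_l1 x, of "([], v)"] by simp
qed

lemma rep_delta_entry: "\<Theta> (qmap (delta t)) (unit_vec n) m = op_entry n m t"
proof -
  obtain u v where t: "t = (u, v)" by force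
  have e: "\<Theta> (qmap (delta t)) (unit_vec n) m = embed_word u (\<lambda>m. unit_vec n (slot_word v m)) m"
    using rep_delta[OF unit_vec_in_lp[OF p_pos]] t by simp
  show ?thesis
  proof (cases "m \<in> range (slot_word u)")
    case True
    then obtain k where k: "m = slot_word u k" by blast
    then have "(\<exists>k'. slot_word u k' = m \<and> slot_word v k' = n) \<longleftrightarrow> slot_word v k = n"
      using slot_word_inj by metis
    then show ?thesis
      using e k by (simp add: embed_word_slot_word op_entry_def t unit_vec_def)
  next
    case False
    then show ?thesis
      using e by (auto simp: embed_word_outside op_entry_def t)
  qed
qed

lemma rep_truncate_entry:
  assumes "finite F"
  shows "\<Theta> (qmap (truncate F a)) (unit_vec n) m = pairing (op_entry n m) (truncate F a)"
proof -
  have "\<Theta> (qmap (truncate F a)) (unit_vec n) = (\<Sum>t\<in>F. \<Theta> (qmap (\<lambda>s. a t * delta t s)) (unit_vec n))"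
    unfolding truncate_eq_sum_delta[OF assms]
    by (rule rep_sum) (use assms unit_vec_in_lp p_pos in auto)
  also have "\<dots> = (\<Sum>t\<in>F. (\<lambda>i. a t * \<Theta> (qmap (delta t)) (unit_vec n) i))"
    using rep_scale[OF delta_in_l1 unit_vec_in_lp[OF p_pos]] by simp
  finally show ?thesis
    by (simp add: pairing_truncate[OF assms] rep_delta_entry sum_apply)
qed

text \<open>By continuity of \<open>\<Theta>\<close>, the entry formula passes from finitely supported functions
  to all of l1.\<close>

lemma rep_entry:
  assumes a: "a \<in> l1"
  shows "\<Theta> (qmap a) (unit_vec n) m = pairing (op_entry n m) a"
proof -
  have "norm (\<Theta> (qmap a) (unit_vec n) m - pairing (op_entry n m) a) \<le> e" if e: "e > 0" for e
  proof -
    obtain d where d: "d > 0"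
      "\<forall>b\<in>l1. qnorm (b - a) < d \<longrightarrow> opnorm p (\<lambda>x. \<Theta> (qmap b) x - \<Theta> (qmap a) x) < e / 2"
      using cont a e by (meson half_gt_zero)
    obtain F where F: "finite F" "infsum (\<lambda>t. norm (a t)) (- F) < min d (e / 2)"
      using l1_tail_small[OF a, of "min d (e / 2)"] d e by auto
    define b where "b = truncate F a"
    have b: "b \<in> l1"
      by (simp add: b_def truncate_in_l1 F(1))
    have small: "norm1 (b - a) < min d (e / 2)"
      using F(2) by (simp add: b_def norm1_truncate_diff)
    have "norm (\<Theta> (qmap (b - a)) (unit_vec n) m) \<le> lpnorm p (\<Theta> (qmap (b - a)) (unit_vec n))"
      using norm_le_lpnorm[OF p_pos rep_in_lp] unit_vec_in_lp[OF p_pos] a b by simp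
    also have "\<dots> \<le> opnorm p (\<Theta> (qmap (b - a)))"
      using lpnorm_le_opnorm[OF rep_bop] unit_vec_in_lp[OF p_pos] lpnorm_unit_vec[OF p_pos] a b by simp
    also have "\<dots> = opnorm p (\<lambda>x. \<Theta> (qmap b) x - \<Theta> (qmap a) x)"
      by (rule opnorm_cong) (use rep_diff a b in auto)
    also have "\<dots> < e / 2"
      using d(2) b small qnorm_le_norm1[of "b - a"] by fastforce
    finally have "norm (\<Theta> (qmap b) (unit_vec n) m - \<Theta> (qmap a) (unit_vec n) m) < e / 2"
      using rep_diff[OF b a unit_vec_in_lp[OF p_pos]] by simp
    moreover have "norm (pairing (op_entry n m) b - pairing (op_entry n m) a) < e / 2"
      using norm_pairing_le[of "b - a" "op_entry n m"] pairing_diff[OF b a, of "op_entry n m"]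
        norm_op_entry_le small a b by fastforce
    moreover have "\<Theta> (qmap b) (unit_vec n) m = pairing (op_entry n m) b"
      unfolding b_def by (rule rep_truncate_entry[OF F(1)])
    ultimately show ?thesis
      using norm_triangle_lt[of "\<Theta> (qmap a) (unit_vec n) m - \<Theta> (qmap b) (unit_vec n) m"
          "pairing (op_entry n m) b - pairing (op_entry n m) a" e]
      by (simp add: norm_minus_commute)
  qed
  then have "norm (\<Theta> (qmap a) (unit_vec n) m - pairing (op_entry n m) a) = 0"
    by (intro dense_eq0_I) simp
  then show ?thesis
    by simp
qed

lemma rep_injective: "\<forall>X\<in>quot. \<forall>Y\<in>quot. (\<forall>x\<in>lp p. \<Theta> X x = \<Theta> Y x) \<longrightarrow> X = Y"
proof (intro ballI impI)
  fix X Y assume X: "X \<in> quot" and Y: "Y \<in> quot" and eq: "\<forall>x\<in>lp p. \<Theta> X x = \<Theta> Y x"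
  obtain a b where a: "a \<in> l1" "X = qmap a" and b: "b \<in> l1" "Y = qmap b"
    using X Y by (auto simp: quot_def)
  have "pairing (op_entry n m) (a - b) = 0" for n m
    using rep_entry[of "a - b"] rep_diff[OF a(1) b(1) unit_vec_in_lp[OF p_pos]] eq a b
      unit_vec_in_lp[OF p_pos] by simp
  then have "a - b \<in> J"
    using in_J_if_level_coeffs_vanish[of "a - b"] a b by (simp add: level_coeff_def)
  then show "X = Y"
    using a b qmap_eqI by simp
qed

lemma rep_mean_pow: "x \<in> lp p \<Longrightarrow> \<Theta> (qmap (mean_pow n)) x = (mean_op ^^ n) x"
proof (induction n arbitrary: x)
  case 0
  then show ?case using rep_unit by simp
next
  case (Suc n)
  have "\<Theta> (qmap mean_gen) x = (\<lambda>i. (1/2) * \<Theta> (qmap (delta ([], [G1]))) x i)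
      + (\<lambda>i. (1/2) * \<Theta> (qmap (delta ([], [G2]))) x i)"
    unfolding mean_gen_def
    by (simp only: rep_add[OF l1_scale[OF delta_in_l1] l1_scale[OF delta_in_l1] Suc.prems]
        rep_scale[OF delta_in_l1 Suc.prems])
  also have "\<dots> = mean_op x"
    using rep_gen[OF Suc.prems] by (auto simp: mean_op_def Ai_eq_slot slot_def fun_eq_iff field_simps)
  finally have "\<Theta> (qmap mean_gen) x = mean_op x" .
  then have "\<Theta> (qmap (mean_pow (Suc n))) x = \<Theta> (qmap (mean_pow n)) (mean_op x)"
    using rep_mult[OF mean_pow_in_l1 mean_gen_in_l1 Suc.prems] by simp
  also have "\<dots> = (mean_op ^^ n) (mean_op x)"
    using Suc.IH mean_op_lp(1)[OF p Suc.prems] by simp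
  also have "\<dots> = (mean_op ^^ Suc n) x"
    by (simp only: funpow_Suc_right o_apply)
  finally show ?case .
qed

lemma opnorm_rep_mean_pow_le: "opnorm p (\<Theta> (qmap (mean_pow n))) \<le> ((1/2) powr (1/p)) ^ n"
proof -
  have "opnorm p (\<Theta> (qmap (mean_pow n))) = opnorm p (mean_op ^^ n)"
    by (rule opnorm_cong) (rule rep_mean_pow)
  also have "\<dots> \<le> ((1/2) powr (1/p)) ^ n"
  proof (rule opnorm_le[OF p_pos])
    fix x assume x: "x \<in> lp p" "lpnorm p x \<le> 1"
    then have "lpnorm p ((mean_op ^^ n) x) \<le> ((1/2) powr (1/p)) ^ n * lpnorm p x"
      using mean_op_funpow_lp[OF p] by blast
    also have "\<dots> \<le> ((1/2) powr (1/p)) ^ n"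
      using x(2) lpnorm_nonneg[of p x] by (simp add: mult_left_le)
    finally show "lpnorm p ((mean_op ^^ n) x) \<le> ((1/2) powr (1/p)) ^ n" .
  qed
  finally show ?thesis .
qed

lemma rep_not_bounded_below: "\<not> (\<exists>c>0. \<forall>a\<in>l1. opnorm p (\<Theta> (qmap a)) \<ge> c * qnorm a)"
proof
  assume "\<exists>c>0. \<forall>a\<in>l1. opnorm p (\<Theta> (qmap a)) \<ge> c * qnorm a"
  then obtain c where c: "c > 0" "\<forall>a\<in>l1. opnorm p (\<Theta> (qmap a)) \<ge> c * qnorm a"
    by blast
  have "(1/2::real) powr (1/p) < 1"
    using powr_less_mono2[of "1/p" "1/2" 1] p_pos by simp
  then obtain n where n: "((1/2::real) powr (1/p)) ^ n < c"
    using real_arch_pow_inv[OF c(1)] by blast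
  have "c \<le> c * qnorm (mean_pow n)"
    using qnorm_mean_pow_ge[of n] c(1) by simp
  also have "\<dots> \<le> opnorm p (\<Theta> (qmap (mean_pow n)))"
    using c(2) mean_pow_in_l1 by blast
  also have "\<dots> \<le> ((1/2) powr (1/p)) ^ n"
    by (rule opnorm_rep_mean_pow_le)
  finally show False
    using n by simp
qed

end

theorem proposition3p20:
  fixes p :: real
    and \<Theta> :: "(cu \<Rightarrow> complex) set \<Rightarrow> (nat \<Rightarrow> complex) \<Rightarrow> nat \<Rightarrow> complex"
  assumes p: "p \<ge> 1"
    and bop: "\<forall>X\<in>quot. is_bop p (\<Theta> X)"
    and hom_add: "\<forall>a\<in>l1. \<forall>b\<in>l1. \<forall>x\<in>lp p.
        \<Theta> (qmap (a + b)) x = \<Theta> (qmap a) x + \<Theta> (qmap b) x"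
    and hom_scal: "\<forall>c::complex. \<forall>a\<in>l1. \<forall>x\<in>lp p.
        \<Theta> (qmap (\<lambda>s. c * a s)) x = (\<lambda>n. c * \<Theta> (qmap a) x n)"
    and hom_mult: "\<forall>a\<in>l1. \<forall>b\<in>l1. \<forall>x\<in>lp p.
        \<Theta> (qmap (conv a b)) x = \<Theta> (qmap a) (\<Theta> (qmap b) x)"
    and cont: "\<forall>a\<in>l1. \<forall>e>0. \<exists>d>0. \<forall>b\<in>l1.
        qnorm (b - a) < d \<longrightarrow> opnorm p (\<lambda>x. \<Theta> (qmap b) x - \<Theta> (qmap a) x) < e"
    and gens: "\<forall>i. \<forall>x\<in>lp p. \<Theta> (qmap (delta (cu_star i))) x = Ai i x"
  shows "(\<forall>X\<in>quot. \<forall>Y\<in>quot. (\<forall>x\<in>lp p. \<Theta> X x = \<Theta> Y x) \<longrightarrow> X = Y) \<and>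
         \<not> (\<exists>c>0. \<forall>a\<in>l1. opnorm p (\<Theta> (qmap a)) \<ge> c * qnorm a)"
proof -
  interpret cu_rep p \<Theta>
    using assms by unfold_locales
  show ?thesis
    using rep_injective rep_not_bounded_below by blast
qed
end
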